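(* There is no $\kappa>0$ such that $\frac{dM_\kappa}{d\kappa}=0$ and $\frac{d}{d\kappa}\Big(\frac{M_\kappa}{R_\kappa}\Big)=0$ simultaneously.
   Context: Equation of state. $P:[0,\infty)\to[0,\infty)$ satisfies: (P1) $P\in C^1([0,\infty))$, $P(0)=0$, $P'(\rho)>0$ for $\rho>0$; (P2) there are $\zeta>0$, $k>0$, $\gamma\in(4/3,2)$ and $f\in C^1([0,\zeta])$ with $f(0)=0$ such that $P(\rho)=k\rho^\gamma(1+f(\rho))$ on $[0,\zeta]$; (P3) $P$ is invertible on $[0,\infty)$ and there are constants $c_s\in(0,1]$, $c_2>0$ with $|p-c_s^2P^{-1}(p)|\le c_2p^{1/2}$ for all $p>0$; (P4) $0<P'(\rho)\le 1$ for all $\rho>0$. Set $Q(\rho)=\int_0^\rho\frac{P'(s)}{s+P(s)}ds$ and $g(y)=Q^{-1}(y)$ for $y>0$, $g(y)=0$ for $y\le0$. Steady states. For each $\kappa>0$ let $y_\kappa$ be the unique solution on $[0,\infty)$ of $y'(r)=-\big(1-\frac{2m(r)}{r}\big)^{-1}\big(\frac{m(r)}{r^2}+4\pi rP(g(y(r)))\big)$, $y(0)=\kappa$, where $m(r)=4\pi\int_0^rs^2g(y(s))\,ds$; it is known that $y_\kappa$ exists globally, is strictly decreasing and has a unique zero $R_\kappa>0$ (the star radius). Put $\rho_\kappa=g(y_\kappa)$ (supported in $[0,R_\kappa]$), $m_\kappa(r)=4\pi\int_0^rs^2\rho_\kappa(s)ds$, $M_\kappa=m_\kappa(R_\kappa)$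 (ADM mass). The maps $\kappa\mapsto y_\kappa, M_\kappa,R_\kappa$ are $C^1$. *)

theory Defs
  imports "HOL-Analysis.Analysis"
begin

definition eos :: "(real \<Rightarrow> real) \<Rightarrow> (real \<Rightarrow> real) \<Rightarrow> bool" where
  "eos P P' \<longleftrightarrow>
     \<comment> \<open>(P1)\<close>
     (\<forall>\<rho>\<ge>0. (P has_real_derivative P' \<rho>) (at \<rho> within {0..})) \<and>
     continuous_on {0..} P' \<and> P 0 = 0 \<and> (\<forall>\<rho>>0. P' \<rho> > 0) \<and>
     \<comment> \<open>(P2)\<close>
     (\<exists>\<zeta> k \<gamma> f f'. \<zeta> > 0 \<and> k > 0 \<and> 4/3 < \<gamma> \<and> \<gamma> < 2 \<and>
        (\<forall>\<rho>\<in>{0..\<zeta>}. (f has_real_derivative f' \<rho>) (at \<rho> within {0..\<zeta>})) \<and>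
        continuous_on {0..\<zeta>} f' \<and> f 0 = 0 \<and>
        (\<forall>\<rho>\<in>{0..\<zeta>}. P \<rho> = k * \<rho> powr \<gamma> * (1 + f \<rho>))) \<and>
     \<comment> \<open>(P3)\<close>
     bij_betw P {0..} {0..} \<and>
     (\<exists>cs c2. 0 < cs \<and> cs \<le> 1 \<and> c2 > 0 \<and>
        (\<forall>p>0. \<bar>p - cs\<^sup>2 * the_inv_into {0..} P p\<bar> \<le> c2 * sqrt p)) \<and>
     \<comment> \<open>(P4)\<close>
     (\<forall>\<rho>>0. 0 < P' \<rho> \<and> P' \<rho> \<le> 1)"

definition Qf :: "(real \<Rightarrow> real) \<Rightarrow> (real \<Rightarrow> real) \<Rightarrow> real \<Rightarrow> real" where
  "Qf P P' \<rho> = integral {0..\<rho>} (\<lambda>s. P' s / (s + P s))"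

definition gf :: "(real \<Rightarrow> real) \<Rightarrow> (real \<Rightarrow> real) \<Rightarrow> real \<Rightarrow> real" where
  "gf P P' y = (if y > 0 then the_inv_into {0<..} (Qf P P') y else 0)"

definition massf :: "(real \<Rightarrow> real) \<Rightarrow> (real \<Rightarrow> real) \<Rightarrow> (real \<Rightarrow> real) \<Rightarrow> real \<Rightarrow> real" where
  "massf P P' y r = 4 * pi * integral {0..r} (\<lambda>s. s\<^sup>2 * gf P P' (y s))"

text \<open>y solves the TOV equation on [0,oo) with y(0) = kappa (at r = 0 the right-hand
  side evaluates to 0, its limiting value, since m(0) = 0).\<close>
definition tov_sol :: "(real \<Rightarrow> real) \<Rightarrow> (real \<Rightarrow> real) \<Rightarrow> real \<Rightarrow> (real \<Rightarrow> real) \<Rightarrow> bool" where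
  "tov_sol P P' \<kappa> y \<longleftrightarrow> y 0 = \<kappa> \<and>
     (\<forall>r>0. 2 * massf P P' y r < r) \<and>
     (\<forall>r\<ge>0. (y has_real_derivative
         (- (1 / (1 - 2 * massf P P' y r / r)) *
            (massf P P' y r / r\<^sup>2 + 4 * pi * r * P (gf P P' (y r)))))
       (at r within {0..}))"

end

theory Submission
  imports Defs
begin

text \<open>Suppose \<open>dM/d\<kappa>\<close> and \<open>d(M/R)/d\<kappa>\<close> both vanish at \<open>\<kappa>\<^sub>0\<close>. Since \<open>M\<close> is positive, also
  \<open>dR/d\<kappa> = 0\<close> there, so for \<open>\<kappa> = \<kappa>\<^sub>0 + h\<close> the pair \<open>(y\<^sub>\<kappa>, m\<^sub>\<kappa>)\<close> agrees with \<open>(y\<^sub>\<kappa>\<^sub>0, m\<^sub>\<kappa>\<^sub>0)\<close>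
  at the radius \<open>R\<^sub>\<kappa>\<^sub>0\<close> up to \<open>o(h)\<close>: both \<open>y\<^sub>\<kappa>(R\<^sub>\<kappa>\<^sub>0) = y\<^sub>\<kappa>(R\<^sub>\<kappa>\<^sub>0) - y\<^sub>\<kappa>(R\<^sub>\<kappa>)\<close> and
  \<open>m\<^sub>\<kappa>(R\<^sub>\<kappa>\<^sub>0) - M\<^sub>\<kappa>\<^sub>0\<close> are controlled by \<open>|R\<^sub>\<kappa> - R\<^sub>\<kappa>\<^sub>0| + |M\<^sub>\<kappa> - M\<^sub>\<kappa>\<^sub>0|\<close>.
  Away from the centre and from the horizon \<open>r = 2m\<close> the TOV system is Lipschitz in \<open>(y, m)\<close>, so a
  Gronwall estimate run backwards from \<open>R\<^sub>\<kappa>\<^sub>0\<close> to a small radius \<open>\<epsilon>\<close> keeps the difference \<open>o(h)\<close>.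
  Run forwards from the centre, where the difference is exactly \<open>h\<close>, the same Lipschitz estimate
  (now using \<open>|m\<^sub>\<kappa> - m\<^sub>\<kappa>\<^sub>0| = O(r\<^sup>3)\<close> to tame the singular factor \<open>1/r\<^sup>2\<close>) shows that the difference
  is still at least \<open>2h/3\<close> at \<open>\<epsilon>\<close>, a contradiction. A continuity argument shows that the solutions
  for \<open>\<kappa>\<close> near \<open>\<kappa>\<^sub>0\<close> stay uniformly away from the horizon, which the Lipschitz bounds require.
  Gronwall's inequality is used in a discrete form: on steps so short that the increment is at most
  half of the running maximum, that maximum at most doubles per step.\<close>

lemma abs_diff_le_of_derivative_bound:
  fixes f f' :: "real \<Rightarrow> real"
  assumes "\<And>x. x \<in> {a..b} \<Longrightarrow> (f has_real_derivative f' x) (at x within {a..b})"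
    and "\<And>x. x \<in> {a..b} \<Longrightarrow> \<bar>f' x\<bar> \<le> B" and "x \<in> {a..b}" "y \<in> {a..b}"
  shows "\<bar>f x - f y\<bar> \<le> B * \<bar>x - y\<bar>"
  using field_differentiable_bound[of "{a..b}" f f' B x y] assms by simp

lemma small_increment_of_zero_derivative:
  fixes f :: "real \<Rightarrow> real"
  assumes "(f has_real_derivative 0) (at x)" "e > 0"
  shows "\<exists>d>0. \<forall>z. \<bar>z - x\<bar> < d \<longrightarrow> \<bar>f z - f x\<bar> \<le> e * \<bar>z - x\<bar>"
proof -
  have "((\<lambda>z. (f z - f x) / (z - x)) \<longlongrightarrow> 0) (at x)"
    using assms(1) by (simp add: has_field_derivative_iff)
  then obtain d where d: "d > 0" "\<And>z. z \<noteq> x \<and> norm (z - x) < d \<Longrightarrow> norm ((f z - f x) / (z - x) - 0) < e"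
    unfolding LIM_eq using assms(2) by blast
  have "\<bar>f z - f x\<bar> \<le> e * \<bar>z - x\<bar>" if z: "\<bar>z - x\<bar> < d" for z
  proof (cases "z = x")
    case False
    then have "\<bar>f z - f x\<bar> / \<bar>z - x\<bar> < e" using d(2)[of z] z by (simp add: abs_div)
    then show ?thesis using False by (simp add: divide_less_eq less_imp_le)
  qed simp
  then show ?thesis using d(1) by blast
qed

lemma small_perturbation_near_0:
  fixes f f' :: "real \<Rightarrow> real"
  assumes df: "\<forall>\<rho>\<in>{0..\<zeta>}. (f has_real_derivative f' \<rho>) (at \<rho> within {0..\<zeta>})"
    and f'c: "continuous_on {0..\<zeta>} f'" and f0: "f 0 = 0" and \<zeta>: "\<zeta> > 0" and c: "c > 0"
  shows "\<exists>s0>0. s0 < \<zeta> \<and> (\<forall>s. 0 < s \<and> s \<le> s0 \<longrightarrow> \<bar>f s\<bar> \<le> 1/2 \<and> s * \<bar>f' s\<bar> \<le> c)"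
proof -
  have "bounded (f' ` {0..\<zeta>})"
    by (rule compact_imp_bounded[OF compact_continuous_image[OF f'c compact_Icc]])
  then obtain F where F: "F > 0" "\<And>s. s \<in> {0..\<zeta>} \<Longrightarrow> \<bar>f' s\<bar> \<le> F"
    unfolding bounded_pos by auto
  have "continuous (at 0 within {0..\<zeta>}) f"
    using DERIV_continuous[of f "f' 0" 0 "{0..\<zeta>}"] df \<zeta> by simp
  then obtain d where d: "d > 0" "\<And>s. s \<in> {0..\<zeta>} \<Longrightarrow> dist s 0 < d \<Longrightarrow> dist (f s) (f 0) < 1/2"
    unfolding continuous_within_eps_delta by (meson divide_pos_pos zero_less_numeral zero_less_one)
  define s0 where "s0 = min (\<zeta>/2) (min (d/2) (c/F))"
  have s0: "s0 > 0" "s0 < \<zeta>" "s0 < d" "s0 * F \<le> c"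
  proof -
    have a: "s0 \<le> \<zeta>/2" "s0 \<le> d/2" "s0 \<le> c/F" unfolding s0_def
      by (rule min.cobounded1, rule order_trans[OF min.cobounded2 min.cobounded1],
          rule order_trans[OF min.cobounded2 min.cobounded2])
    have "s0 > 0" using \<zeta> d F c unfolding s0_def by auto
    moreover have "s0 * F \<le> c/F * F" using a(3) F by (intro mult_right_mono) auto
    ultimately show "s0 > 0" "s0 < \<zeta>" "s0 < d" "s0 * F \<le> c" using a \<zeta> d F by auto
  qed
  have "\<bar>f s\<bar> \<le> 1/2 \<and> s * \<bar>f' s\<bar> \<le> c" if s: "0 < s" "s \<le> s0" for s
  proof
    show "\<bar>f s\<bar> \<le> 1/2" using d(2)[of s] s s0 f0 by (auto simp: dist_real_def)
    have "s * \<bar>f' s\<bar> \<le> s0 * F" using F(2)[of s] s s0 by (intro mult_mono) auto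
    then show "s * \<bar>f' s\<bar> \<le> c" using s0 by simp
  qed
  then show ?thesis using s0 by blast
qed

lemma stepwise_doubling_prefix:
  fixes D :: "real \<Rightarrow> real"
  assumes ab: "a \<le> b" and d: "\<delta> > 0" and cont: "continuous_on {a..b} D"
    and nn: "\<And>r. r \<in> {a..b} \<Longrightarrow> D r \<ge> 0"
    and step: "\<And>s t W r. a \<le> s \<Longrightarrow> s \<le> t \<Longrightarrow> t \<le> b \<Longrightarrow> t - s \<le> \<delta> \<Longrightarrow>
       (\<forall>r\<in>{a..t}. D r \<le> W) \<Longrightarrow> r \<in> {s..t} \<Longrightarrow> D r \<le> D s + W/2"
  shows "\<forall>r\<in>{a..min b (a + real n * \<delta>)}. D r \<le> 2^n * D a"
proof (induction n)
  case 0
  then show ?case using ab by auto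
next
  case (Suc n)
  define s where "s = min b (a + real n * \<delta>)"
  define t where "t = min b (a + real (Suc n) * \<delta>)"
  have st: "a \<le> s" "s \<le> t" "t \<le> b" "t - s \<le> \<delta>"
    unfolding s_def t_def using ab d by (auto simp: min_def algebra_simps)
  obtain x where x: "x \<in> {a..t}" "\<And>y. y \<in> {a..t} \<Longrightarrow> D y \<le> D x"
    using continuous_attains_sup[OF compact_Icc _ continuous_on_subset[OF cont], of a t] st by auto
  have Da: "D a \<ge> 0" using nn ab by simp
  have IH: "\<And>r. r \<in> {a..s} \<Longrightarrow> D r \<le> 2^n * D a" using Suc unfolding s_def by blast
  have W: "D x \<le> 2^Suc n * D a"
  proof (cases "x \<le> s")
    case True
    then have "D x \<le> 2^n * D a" using IH x by auto
    also have "\<dots> \<le> 2^Suc n * D a" using Da by simp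
    finally show ?thesis .
  next
    case False
    then have "D x \<le> D s + D x / 2" using step[OF st, of "D x" x] x by auto
    then have "D x \<le> 2 * D s" by simp
    also have "\<dots> \<le> 2 * (2^n * D a)" using IH[of s] st by simp
    finally show ?thesis by simp
  qed
  have "\<forall>r\<in>{a..t}. D r \<le> 2^Suc n * D a"
  proof
    fix r assume "r \<in> {a..t}"
    then have "D r \<le> D x" by (rule x(2))
    then show "D r \<le> 2^Suc n * D a" using W by linarith
  qed
  then show ?case unfolding t_def .
qed

lemma stepwise_doubling_bound:
  fixes D :: "real \<Rightarrow> real"
  assumes ab: "a \<le> b" and d: "\<delta> > 0" and cont: "continuous_on {a..b} D"
    and nn: "\<And>r. r \<in> {a..b} \<Longrightarrow> D r \<ge> 0"
    and step: "\<And>s t W r. a \<le> s \<Longrightarrow> s \<le> t \<Longrightarrow> t \<le> b \<Longrightarrow> t - s \<le> \<delta> \<Longrightarrow>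
       (\<forall>r\<in>{a..t}. D r \<le> W) \<Longrightarrow> r \<in> {s..t} \<Longrightarrow> D r \<le> D s + W/2"
    and n: "b - a \<le> real n * \<delta>"
    and r: "r \<in> {a..b}"
  shows "D r \<le> 2^n * D a"
proof -
  have e: "min b (a + real n * \<delta>) = b" using n by (intro min_absorb1) linarith
  have "\<forall>r\<in>{a..min b (a + real n * \<delta>)}. D r \<le> 2^n * D a"
    by (rule stepwise_doubling_prefix[OF ab d cont nn step])
  then have "\<forall>r\<in>{a..b}. D r \<le> 2^n * D a" unfolding e .
  then show ?thesis using r by blast
qed

lemma stepwise_doubling_bound_backward:
  fixes D :: "real \<Rightarrow> real"
  assumes ab: "a \<le> b" and d: "\<delta> > 0" and cont: "continuous_on {a..b} D"
    and nn: "\<And>r. r \<in> {a..b} \<Longrightarrow> D r \<ge> 0"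
    and step: "\<And>s t W r. a \<le> s \<Longrightarrow> s \<le> t \<Longrightarrow> t \<le> b \<Longrightarrow> t - s \<le> \<delta> \<Longrightarrow>
       (\<forall>r\<in>{s..b}. D r \<le> W) \<Longrightarrow> r \<in> {s..t} \<Longrightarrow> D r \<le> D t + W/2"
    and n: "b - a \<le> real n * \<delta>"
    and r: "r \<in> {a..b}"
  shows "D r \<le> 2^n * D b"
proof -
  define D' where "D' x = D (- x)" for x
  have "D' (-r) \<le> 2^n * D' (-b)"
  proof (rule stepwise_doubling_bound[where \<delta>=\<delta> and a="-b" and b="-a" and n=n])
    fix s t W x assume h: "-b \<le> s" "s \<le> t" "t \<le> -a" "t - s \<le> \<delta>" "\<forall>r\<in>{-b..t}. D' r \<le> W" "x \<in> {s..t}"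
    have "\<forall>r\<in>{-t..b}. D r \<le> W"
    proof
      fix r assume "r \<in> {-t..b}"
      then have "-r \<in> {-b..t}" by auto
      then show "D r \<le> W" using h(5) unfolding D'_def by (metis minus_minus)
    qed
    then show "D' x \<le> D' s + W/2" using step[of "-t" "-s" W "-x"] h unfolding D'_def by auto
  next
    show "continuous_on {-b..-a} D'" unfolding D'_def
      by (rule continuous_on_compose2[OF cont]) (auto intro: continuous_intros)
  next
    fix x assume "x \<in> {-b..-a}"
    then show "D' x \<ge> 0" unfolding D'_def using nn[of "-x"] by simp
  qed (use ab d n r in auto)
  then show ?thesis unfolding D'_def by simp
qed

lemma continuity_bootstrap:
  fixes D :: "real \<Rightarrow> real"
  assumes cont: "continuous_on {a..b} D" and start: "D a < E"
    and improve: "\<And>t. t \<in> {a..b} \<Longrightarrow> \<forall>r\<in>{a..t}. D r \<le> E \<Longrightarrow> D t < E"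
    and r: "r \<in> {a..b}"
  shows "D r < E"
proof (rule ccontr)
  assume "\<not> D r < E"
  define Z where "Z = {s \<in> {a..b}. E \<le> D s}"
  have "Z \<noteq> {}" using r \<open>\<not> D r < E\<close> unfolding Z_def by auto
  moreover have Z_below: "bdd_below Z" unfolding Z_def by (rule bdd_belowI[of _ a]) auto
  moreover have "closed Z" unfolding Z_def by (rule continuous_on_closed_Collect_le[OF continuous_on_const cont]) simp
  ultimately have first: "Inf Z \<in> Z" by (rule closed_contains_Inf)
  define s where "s = Inf Z"
  have s: "a < s" "s \<le> b" "E \<le> D s" using first start unfolding s_def Z_def by (auto simp: le_less)
  have before: "D u < E" if "a \<le> u" "u < s" for u
    using cInf_lower[OF _ Z_below, of u] that s unfolding s_def Z_def by force
  have "closed {u \<in> {a..s}. D u \<le> E}"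
    by (rule continuous_on_closed_Collect_le[OF continuous_on_subset[OF cont] continuous_on_const]) (use s in auto)
  moreover have "{a..<s} \<subseteq> {u \<in> {a..s}. D u \<le> E}" using before by fastforce
  ultimately have "closure {a..<s} \<subseteq> {u \<in> {a..s}. D u \<le> E}" by (rule closure_minimal[rotated])
  then have "\<forall>u\<in>{a..s}. D u \<le> E" using s(1) by auto
  then show False using improve[of s] s by force
qed

section \<open>The right-hand side of the TOV equation\<close>

text \<open>The right-hand side in \<open>tov_sol\<close> as a function of \<open>m = m(r)\<close>, \<open>p = P(g(y(r)))\<close> and \<open>r\<close>;
  by the convention \<open>x / 0 = 0\<close> it vanishes at \<open>r = 0\<close>.\<close>

definition tov_rhs :: "real \<Rightarrow> real \<Rightarrow> real \<Rightarrow> real" where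
  "tov_rhs m p r = - (1 / (1 - 2 * m / r)) * (m / r\<^sup>2 + 4 * pi * r * p)"

lemma tov_rhs_0: "tov_rhs m p 0 = 0" unfolding tov_rhs_def by simp

lemma tov_rhs_eq: assumes "r > 0" "r - 2*m > 0"
  shows "tov_rhs m p r = - (m + 4*pi*r^3*p) / (r * (r - 2*m))"
  using assms unfolding tov_rhs_def by (simp add: field_simps power2_eq_square power3_eq_cube)

lemma tov_rhs_bound:
  assumes r: "0 < r" "r \<le> T" and m: "0 \<le> m" "m \<le> C_m * r^3"
    and p: "0 \<le> p" "p \<le> Pm" and B: "\<beta>*r \<le> r - 2*m" "\<beta> > 0"
  shows "\<bar>tov_rhs m p r\<bar> \<le> (C_m + 4*pi*Pm) * T / \<beta>"
proof -
  have Bp: "r - 2*m > 0" using B r by (smt (verit) mult_pos_pos)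
  have num: "0 \<le> m + 4*pi*r^3*p" using m p r by simp
  have "\<bar>tov_rhs m p r\<bar> = (m + 4*pi*r^3*p) / (r * (r - 2*m))"
    using tov_rhs_eq[OF r(1) Bp] num Bp r by (simp add: abs_div)
  also have "\<dots> \<le> (m + 4*pi*r^3*p) / (r * (\<beta>*r))"
    by (rule divide_left_mono) (use num B r Bp in \<open>auto intro: mult_left_mono\<close>)
  also have "\<dots> \<le> (C_m*r^3 + 4*pi*r^3*Pm) / (r * (\<beta>*r))"
    by (rule divide_right_mono) (use m p r B in \<open>auto intro: add_mono mult_left_mono\<close>)
  also have "\<dots> = (C_m + 4*pi*Pm) * r / \<beta>" using r B by (simp add: field_simps power3_eq_cube)
  also have "\<dots> \<le> (C_m + 4*pi*Pm) * T / \<beta>"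
  proof -
    have "C_m \<ge> 0" using m r by (smt (verit) mult_nonneg_nonneg zero_less_power mult_pos_pos
        zero_le_mult_iff)
    then have "(C_m + 4*pi*Pm) \<ge> 0" using p by simp
    then show ?thesis using r B by (intro divide_right_mono mult_left_mono) auto
  qed
  finally show ?thesis .
qed

lemma tov_rhs_diff_eq:
  assumes r: "0 < r" and B1: "0 < r - 2*m1" and B2: "0 < r - 2*m2"
  shows "tov_rhs m1 p1 r - tov_rhs m2 p2 r =
    - ((m1-m2)*(r + 8*pi*r^3*p1) + (p1-p2)*(4*pi*r^4 - 8*pi*r^3*m1)) / (r*(r - 2*m1)*(r - 2*m2))"
proof -
  have e1: "tov_rhs m1 p1 r * (r*(r - 2*m1)) = -(m1 + 4*pi*r^3*p1)"
    unfolding tov_rhs_eq[OF r B1] using r B1 by simp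
  have e2: "tov_rhs m2 p2 r * (r*(r - 2*m2)) = -(m2 + 4*pi*r^3*p2)"
    unfolding tov_rhs_eq[OF r B2] using r B2 by simp
  have "(tov_rhs m1 p1 r - tov_rhs m2 p2 r) * (r*(r - 2*m1)*(r - 2*m2))
      = (tov_rhs m1 p1 r * (r*(r - 2*m1)))*(r - 2*m2) - (tov_rhs m2 p2 r * (r*(r - 2*m2)))*(r - 2*m1)"
    by (simp add: algebra_simps)
  also have "\<dots> = - ((m1-m2)*(r + 8*pi*r^3*p1) + (p1-p2)*(4*pi*r^4 - 8*pi*r^3*m1))"
    unfolding e1 e2 by (simp add: algebra_simps eval_nat_numeral)
  finally show ?thesis using r B1 B2 by (simp add: eq_divide_eq)
qed

lemma tov_rhs_numerator_bound:
  assumes r: "0 < r" and m: "0 \<le> m1" "m1 \<le> C_m * r^3" and p: "0 \<le> p1" "p1 \<le> Pm"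
  shows "\<bar>(m1-m2)*(r + 8*pi*r^3*p1) + (p1-p2)*(4*pi*r^4 - 8*pi*r^3*m1)\<bar>
    \<le> \<bar>m1-m2\<bar>*(r + 8*pi*r^3*Pm) + \<bar>p1-p2\<bar>*(4*pi*r^4 + 8*pi*C_m*r^6)"
proof -
  have N1: "\<bar>r + 8*pi*r^3*p1\<bar> \<le> r + 8*pi*r^3*Pm" using r p by simp
  have N2: "\<bar>4*pi*r^4 - 8*pi*r^3*m1\<bar> \<le> 4*pi*r^4 + 8*pi*C_m*r^6"
  proof -
    have "8*pi*r^3*m1 \<le> 8*pi*r^3*(C_m*r^3)" using m r by simp
    also have "\<dots> = 8*pi*C_m*r^6" by (simp add: power_add[symmetric])
    finally have a: "8*pi*r^3*m1 \<le> 8*pi*C_m*r^6" .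
    have b: "0 \<le> 8*pi*r^3*m1" "0 \<le> 4*pi*r^4" using m r by simp_all
    show ?thesis unfolding abs_le_iff using a b by linarith
  qed
  have "\<bar>(m1-m2)*(r + 8*pi*r^3*p1) + (p1-p2)*(4*pi*r^4 - 8*pi*r^3*m1)\<bar>
      \<le> \<bar>(m1-m2)*(r + 8*pi*r^3*p1)\<bar> + \<bar>(p1-p2)*(4*pi*r^4 - 8*pi*r^3*m1)\<bar>"
    by (rule abs_triangle_ineq)
  also have "\<dots> = \<bar>m1-m2\<bar>*\<bar>r + 8*pi*r^3*p1\<bar> + \<bar>p1-p2\<bar>*\<bar>4*pi*r^4 - 8*pi*r^3*m1\<bar>"
    by (simp add: abs_mult)
  also have "\<dots> \<le> \<bar>m1-m2\<bar>*(r + 8*pi*r^3*Pm) + \<bar>p1-p2\<bar>*(4*pi*r^4 + 8*pi*C_m*r^6)"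
    by (intro add_mono mult_left_mono N1 N2) auto
  finally show ?thesis .
qed

lemma tov_rhs_Lipschitz:
  assumes r: "0 < r" "r \<le> T" and m: "0 \<le> m1" "m1 \<le> C_m * r^3"
    and p: "0 \<le> p1" "p1 \<le> Pm"
    and B: "\<beta>*r \<le> r - 2*m1" "\<beta>*r \<le> r - 2*m2" "\<beta> > 0"
  shows "\<bar>tov_rhs m1 p1 r - tov_rhs m2 p2 r\<bar> \<le> (1 + 8*pi*T\<^sup>2*Pm)/\<beta>\<^sup>2 * (\<bar>m1-m2\<bar>/r\<^sup>2)
          + (4*pi*T + 8*pi*C_m*T^3)/\<beta>\<^sup>2 * \<bar>p1-p2\<bar>"
proof -
  define B1 where "B1 = r - 2*m1"
  define B2 where "B2 = r - 2*m2"
  have br: "\<beta>*r > 0" using B r by simp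
  have B1: "B1 \<ge> \<beta>*r" "B1 > 0" unfolding B1_def using B br by linarith+
  have B2: "B2 \<ge> \<beta>*r" "B2 > 0" unfolding B2_def using B br by linarith+
  have C_m: "C_m \<ge> 0" using m r by (smt (verit) zero_le_mult_iff zero_less_power)
  have Pm: "Pm \<ge> 0" using p by simp
  define N where "N = (m1-m2)*(r + 8*pi*r^3*p1) + (p1-p2)*(4*pi*r^4 - 8*pi*r^3*m1)"
  have diff: "tov_rhs m1 p1 r - tov_rhs m2 p2 r = - N / (r*B1*B2)"
    unfolding N_def B1_def B2_def by (rule tov_rhs_diff_eq) (use B1 B2 r in \<open>simp_all add: B1_def B2_def\<close>)
  have den: "r*B1*B2 \<ge> \<beta>\<^sup>2 * r^3"
  proof -
    have "r*(\<beta>*r)*(\<beta>*r) \<le> r*B1*B2" using B1 B2 r B by (intro mult_mono) auto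
    then show ?thesis by (simp add: power2_eq_square power3_eq_cube algebra_simps)
  qed
  have dpos: "\<beta>\<^sup>2 * r^3 > 0" using B r by simp
  have "\<bar>N\<bar> \<le> \<bar>m1-m2\<bar>*(r + 8*pi*r^3*Pm) + \<bar>p1-p2\<bar>*(4*pi*r^4 + 8*pi*C_m*r^6)"
    unfolding N_def by (rule tov_rhs_numerator_bound[OF r(1) m(1,2) p(1,2)])
  then have "\<bar>N\<bar> / (\<beta>\<^sup>2 * r^3) \<le> (\<bar>m1-m2\<bar>*(r + 8*pi*r^3*Pm) + \<bar>p1-p2\<bar>*(4*pi*r^4 + 8*pi*C_m*r^6)) / (\<beta>\<^sup>2 * r^3)"
    using dpos by (simp add: divide_right_mono)
  also have "\<dots> = (1 + 8*pi*r\<^sup>2*Pm)/\<beta>\<^sup>2 * (\<bar>m1-m2\<bar>/r\<^sup>2) + (4*pi*r + 8*pi*C_m*r^3)/\<beta>\<^sup>2 * \<bar>p1-p2\<bar>"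
    using r B by (simp add: field_simps power2_eq_square power3_eq_cube power_numeral_reduce)
  also have "\<dots> \<le> (1 + 8*pi*T\<^sup>2*Pm)/\<beta>\<^sup>2 * (\<bar>m1-m2\<bar>/r\<^sup>2) + (4*pi*T + 8*pi*C_m*T^3)/\<beta>\<^sup>2 * \<bar>p1-p2\<bar>"
  proof -
    have h1: "1 + 8*pi*r\<^sup>2*Pm \<le> 1 + 8*pi*T\<^sup>2*Pm" using r Pm by (simp add: power_mono mult_right_mono)
    have h2: "4*pi*r + 8*pi*C_m*r^3 \<le> 4*pi*T + 8*pi*C_m*T^3"
      using r C_m by (intro add_mono) (auto intro!: mult_left_mono power_mono)
    have "(1 + 8*pi*r\<^sup>2*Pm)/\<beta>\<^sup>2 * (\<bar>m1-m2\<bar>/r\<^sup>2) \<le> (1 + 8*pi*T\<^sup>2*Pm)/\<beta>\<^sup>2 * (\<bar>m1-m2\<bar>/r\<^sup>2)"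
      by (rule mult_right_mono[OF divide_right_mono[OF h1]]) auto
    moreover have "(4*pi*r + 8*pi*C_m*r^3)/\<beta>\<^sup>2 * \<bar>p1-p2\<bar> \<le> (4*pi*T + 8*pi*C_m*T^3)/\<beta>\<^sup>2 * \<bar>p1-p2\<bar>"
      by (rule mult_right_mono[OF divide_right_mono[OF h2]]) auto
    ultimately show ?thesis by linarith
  qed
  finally have X: "\<bar>N\<bar> / (\<beta>\<^sup>2 * r^3) \<le> (1 + 8*pi*T\<^sup>2*Pm)/\<beta>\<^sup>2 * (\<bar>m1-m2\<bar>/r\<^sup>2)
      + (4*pi*T + 8*pi*C_m*T^3)/\<beta>\<^sup>2 * \<bar>p1-p2\<bar>" .
  have "\<bar>tov_rhs m1 p1 r - tov_rhs m2 p2 r\<bar> = \<bar>N\<bar> / (r*B1*B2)" unfolding diff using r B1 B2 by (simp add: abs_div)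
  also have "\<dots> \<le> \<bar>N\<bar> / (\<beta>\<^sup>2 * r^3)" by (rule divide_left_mono[OF den]) (use dpos r B1 B2 in auto)
  finally show ?thesis using X by linarith
qed

section \<open>The equation of state\<close>

locale equation_of_state =
  fixes P P' :: "real \<Rightarrow> real"
  assumes eos: "eos P P'"
begin

lemma P_has_derivative: "\<rho> \<ge> 0 \<Longrightarrow> (P has_real_derivative P' \<rho>) (at \<rho> within {0..})"
  using eos unfolding eos_def by (elim conjE) simp

lemma P'_continuous: "continuous_on {0..} P'"
  using eos unfolding eos_def by (elim conjE)

lemma P_0: "P 0 = 0"
  using eos unfolding eos_def by (elim conjE)

lemma P'_pos: "\<rho> > 0 \<Longrightarrow> 0 < P' \<rho>"
  using eos unfolding eos_def by (elim conjE) simp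

lemma P'_le_1: "\<rho> > 0 \<Longrightarrow> P' \<rho> \<le> 1"
  using eos unfolding eos_def by (elim conjE) simp

lemma P_bij: "bij_betw P {0..} {0..}"
  using eos unfolding eos_def by (elim conjE)

lemma P_polytropic_near_0:
  "\<exists>\<zeta> k \<gamma> f f'. \<zeta> > 0 \<and> k > 0 \<and> 4/3 < \<gamma> \<and> \<gamma> < 2 \<and>
     (\<forall>\<rho>\<in>{0..\<zeta>}. (f has_real_derivative f' \<rho>) (at \<rho> within {0..\<zeta>})) \<and>
     continuous_on {0..\<zeta>} f' \<and> f 0 = 0 \<and>
     (\<forall>\<rho>\<in>{0..\<zeta>}. P \<rho> = k * \<rho> powr \<gamma> * (1 + f \<rho>))"
  using eos unfolding eos_def by (elim conjE)

lemma P_inverse_asymptotics: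
  "\<exists>cs c2. 0 < cs \<and> cs \<le> 1 \<and> c2 > 0 \<and>
     (\<forall>p>0. \<bar>p - cs\<^sup>2 * the_inv_into {0..} P p\<bar> \<le> c2 * sqrt p)"
  using eos unfolding eos_def by (elim conjE)

lemma P_has_derivative_at: "\<rho> > 0 \<Longrightarrow> (P has_real_derivative P' \<rho>) (at \<rho>)"
proof -
  assume "\<rho> > 0"
  then have "at \<rho> within {0..} = at \<rho>" by (intro at_within_interior) simp
  then show ?thesis using P_has_derivative[of \<rho>] \<open>\<rho> > 0\<close> by simp
qed

lemma P_nonneg: "\<rho> \<ge> 0 \<Longrightarrow> P \<rho> \<ge> 0"
  using bij_betw_apply[OF P_bij] by simp

lemma P_pos: "\<rho> > 0 \<Longrightarrow> P \<rho> > 0"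
proof -
  assume "\<rho> > 0"
  then have "P \<rho> \<noteq> P 0" using bij_betw_imp_inj_on[OF P_bij] unfolding inj_on_def by force
  then show ?thesis using P_nonneg[of \<rho>] \<open>\<rho> > 0\<close> P_0 by auto
qed

lemma P_continuous: "continuous_on {0..} P"
  unfolding continuous_on_eq_continuous_within using DERIV_continuous[OF P_has_derivative] by simp

lemma P'_at_0: "0 \<le> P' 0 \<and> P' 0 \<le> 1"
proof -
  have lim: "(P' \<longlongrightarrow> P' 0) (at_right 0)"
    using P'_continuous by (auto simp: continuous_on_eq_continuous_within continuous_within
        intro: tendsto_within_subset)
  have "eventually (\<lambda>x. 0 \<le> P' x \<and> P' x \<le> 1) (at_right (0::real))"
    unfolding eventually_at_right_field by (rule exI[of _ 1]) (simp add: P'_pos P'_le_1 less_imp_le)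
  then have "eventually (\<lambda>x. 0 \<le> P' x) (at_right (0::real))" "eventually (\<lambda>x. P' x \<le> 1) (at_right (0::real))"
    by (auto elim: eventually_mono)
  then show ?thesis using tendsto_lowerbound[OF lim] tendsto_upperbound[OF lim] by simp
qed

lemma P'_bounds: "\<rho> \<ge> 0 \<Longrightarrow> 0 \<le> P' \<rho> \<and> P' \<rho> \<le> 1"
  using P'_at_0 P'_pos[of \<rho>] P'_le_1[of \<rho>] by (cases "\<rho> = 0") simp_all

lemma P_Lipschitz: assumes "a \<ge> 0" "b \<ge> 0" shows "\<bar>P a - P b\<bar> \<le> \<bar>a - b\<bar>"
proof -
  have "\<bar>P a - P b\<bar> \<le> 1 * \<bar>a - b\<bar>"
  proof (rule abs_diff_le_of_derivative_bound[where a="min a b" and b="max a b" and f'=P'])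
    fix x assume "x \<in> {min a b..max a b}"
    then show "(P has_real_derivative P' x) (at x within {min a b..max a b})" "\<bar>P' x\<bar> \<le> 1"
      using has_field_derivative_subset[OF P_has_derivative[of x]] P'_bounds[of x] assms by auto
  qed auto
  then show ?thesis by simp
qed

lemma P_le_id: "\<rho> \<ge> 0 \<Longrightarrow> P \<rho> \<le> \<rho>"
  using P_Lipschitz[of \<rho> 0] P_0 by simp


lemma P'_div_id_polytropic:
  assumes df: "\<forall>\<rho>\<in>{0..\<zeta>}. (f has_real_derivative f' \<rho>) (at \<rho> within {0..\<zeta>})"
    and Pf: "\<forall>\<rho>\<in>{0..\<zeta>}. P \<rho> = k * \<rho> powr \<gamma> * (1 + f \<rho>)"
    and s: "0 < s" "s < \<zeta>"
  shows "P' s / s = s powr (\<gamma> - 2) * (k*\<gamma>*(1 + f s) + k * s * f' s)"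
proof -
  have sz: "s \<in> {0<..<\<zeta>}" using s by auto
  have dfs: "(f has_real_derivative f' s) (at s)"
  proof -
    have "(f has_real_derivative f' s) (at s within {0<..<\<zeta>})"
      using has_field_derivative_subset[of f "f' s" s "{0..\<zeta>}" "{0<..<\<zeta>}"] df sz by fastforce
    moreover have "at s within {0<..<\<zeta>} = at s" by (rule at_within_open) (use sz in simp_all)
    ultimately show ?thesis by simp
  qed
  have dH: "((\<lambda>\<rho>. k * \<rho> powr \<gamma> * (1 + f \<rho>)) has_real_derivative
       k * (\<gamma> * s powr (\<gamma> - 1)) * (1 + f s) + k * s powr \<gamma> * f' s) (at s)"
    using s by (auto intro!: derivative_eq_intros dfs has_real_derivative_powr simp: algebra_simps)
  have "(P has_real_derivative k * (\<gamma> * s powr (\<gamma> - 1)) * (1 + f s) + k * s powr \<gamma> * f' s) (at s)"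
    by (rule has_field_derivative_transform_within_open[OF dH, of "{0<..<\<zeta>}"]) (use sz Pf in auto)
  then have P's: "P' s = k * (\<gamma> * s powr (\<gamma> - 1)) * (1 + f s) + k * s powr \<gamma> * f' s"
    using DERIV_unique P_has_derivative_at s by blast
  have e1: "s powr (\<gamma>-1) = s powr (\<gamma>-2) * s" using s powr_add[of s "\<gamma>-2" 1] by simp
  have e2: "s powr \<gamma> = s powr (\<gamma>-2) * s * s" using s powr_add[of s "\<gamma>-2" 2]
    by (simp add: power2_eq_square[symmetric] powr_realpow)
  show ?thesis using s unfolding P's e1 e2 by (simp add: field_simps)
qed

lemma P'_div_id_powr_bounds:
  "\<exists>s0 \<gamma> c C. s0 > 0 \<and> c > 0 \<and> C > 0 \<and> 1 < \<gamma> \<and> \<gamma> < 2 \<and>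
     (\<forall>s. 0 < s \<and> s \<le> s0 \<longrightarrow> c * s powr (\<gamma>-2) \<le> P' s / s \<and> P' s / s \<le> C * s powr (\<gamma>-2))"
proof -
  obtain \<zeta> k \<gamma> f f' where zk: "\<zeta> > 0" "k > 0" "4/3 < \<gamma>" "\<gamma> < 2"
    and df: "\<forall>\<rho>\<in>{0..\<zeta>}. (f has_real_derivative f' \<rho>) (at \<rho> within {0..\<zeta>})"
    and f'c: "continuous_on {0..\<zeta>} f'" and f0: "f 0 = 0"
    and Pf: "\<forall>\<rho>\<in>{0..\<zeta>}. P \<rho> = k * \<rho> powr \<gamma> * (1 + f \<rho>)"
    using P_polytropic_near_0 by blast
  obtain s0 where s0: "s0 > 0" "s0 < \<zeta>"
    and small: "\<And>s. 0 < s \<Longrightarrow> s \<le> s0 \<Longrightarrow> \<bar>f s\<bar> \<le> 1/2 \<and> s * \<bar>f' s\<bar> \<le> \<gamma>/4"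
    using small_perturbation_near_0[OF df f'c f0 zk(1), of "\<gamma>/4"] zk by auto
  have main: "k*\<gamma>/4 * s powr (\<gamma>-2) \<le> P' s / s \<and> P' s / s \<le> 2*(k*\<gamma>) * s powr (\<gamma>-2)"
    if s: "0 < s" "s \<le> s0" for s
  proof -
    have fs: "\<bar>f s\<bar> \<le> 1/2" using small[OF s] by simp
    have "\<bar>k * s * f' s\<bar> = k * (s * \<bar>f' s\<bar>)" using s zk by (simp add: abs_mult)
    also have "\<dots> \<le> k * (\<gamma>/4)" using small[OF s] zk by (intro mult_left_mono) auto
    finally have f's: "\<bar>k * s * f' s\<bar> \<le> k * \<gamma>/4" by simp
    have "k*\<gamma>*(1/2) \<le> k*\<gamma>*(1 + f s)" "k*\<gamma>*(1 + f s) \<le> k*\<gamma>*(3/2)"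
      using fs zk by (intro mult_left_mono; simp)+
    moreover have "- (k*\<gamma>/4) \<le> k * s * f' s" "k * s * f' s \<le> k*\<gamma>/4"
      using f's by (simp_all add: abs_le_iff)
    moreover have "k*\<gamma> > 0" using zk by simp
    ultimately have lo: "k*\<gamma>/4 \<le> k*\<gamma>*(1 + f s) + k * s * f' s"
      and hi: "k*\<gamma>*(1 + f s) + k * s * f' s \<le> 2*(k*\<gamma>)"
      by linarith+
    have q: "P' s / s = s powr (\<gamma>-2) * (k*\<gamma>*(1 + f s) + k * s * f' s)"
      using P'_div_id_polytropic[OF df Pf s(1)] s s0 by simp
    have "s powr (\<gamma>-2) \<ge> 0" by simp
    from mult_right_mono[OF lo this] mult_right_mono[OF hi this] show ?thesis
      unfolding q by (simp add: ac_simps)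
  qed
  show ?thesis
    using main s0 zk by (intro exI[of _ s0] exI[of _ \<gamma>] exI[of _ "k*\<gamma>/4"] exI[of _ "2*(k*\<gamma>)"]) auto
qed

definition Q_integrand :: "real \<Rightarrow> real" where "Q_integrand s = P' s / (s + P s)"

lemma Q_eq_integral: "Qf P P' \<rho> = integral {0..\<rho>} Q_integrand"
  unfolding Qf_def Q_integrand_def ..

lemma Q_integrand_nonneg: "s \<ge> 0 \<Longrightarrow> Q_integrand s \<ge> 0"
  unfolding Q_integrand_def using P'_bounds[of s] P_nonneg[of s] by simp

lemma Q_integrand_pos: "s > 0 \<Longrightarrow> Q_integrand s > 0"
  unfolding Q_integrand_def using P'_pos[of s] P_nonneg[of s] by simp


lemma Q_integrand_continuous: "continuous_on {0<..} Q_integrand"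
proof -
  have "continuous_on {0<..} P'" by (rule continuous_on_subset[OF P'_continuous]) auto
  moreover have "continuous_on {0<..} P" by (rule continuous_on_subset[OF P_continuous]) auto
  moreover have "\<forall>x\<in>{0<..}. x + P x \<noteq> 0"
  proof
    fix x :: real assume "x \<in> {0<..}"
    then show "x + P x \<noteq> 0" using P_nonneg[of x] by simp
  qed
  ultimately show ?thesis unfolding Q_integrand_def
    by (intro continuous_on_divide continuous_on_add continuous_on_id)
qed

lemma Q_integrand_powr_bounds:
  "\<exists>s0 \<gamma> c C. s0 > 0 \<and> c > 0 \<and> C > 0 \<and> 1 < \<gamma> \<and> \<gamma> < 2 \<and>
     (\<forall>s. 0 < s \<and> s \<le> s0 \<longrightarrow> c * s powr (\<gamma>-2) \<le> Q_integrand s \<and> Q_integrand s \<le> C * s powr (\<gamma>-2))"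
proof -
  obtain s0 \<gamma> c C where h: "s0 > 0" "c > 0" "C > 0" "1 < \<gamma>" "\<gamma> < 2"
    and b: "\<And>s. 0 < s \<Longrightarrow> s \<le> s0 \<Longrightarrow> c * s powr (\<gamma>-2) \<le> P' s / s \<and> P' s / s \<le> C * s powr (\<gamma>-2)"
    using P'_div_id_powr_bounds by blast
  have main: "c/2 * s powr (\<gamma>-2) \<le> Q_integrand s \<and> Q_integrand s \<le> C * s powr (\<gamma>-2)" if s: "0 < s" "s \<le> s0" for s
  proof -
    have Pp: "0 \<le> P s" "P s \<le> s" using P_nonneg[of s] P_le_id[of s] s by auto
    have P'n: "P' s \<ge> 0" using P'_pos[of s] s by simp
    have d1: "P' s / (s*2) \<le> P' s / (s + P s)"
      by (rule divide_left_mono) (use Pp s P'n in auto)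
    have d2: "P' s / (s + P s) \<le> P' s / s"
      by (rule divide_left_mono) (use Pp s P'n in auto)
    have "(P' s / s) * (1/2) = P' s / (s*2)" by simp
    then have "(P' s / s) * (1/2) \<le> Q_integrand s" "Q_integrand s \<le> P' s / s" using d1 d2 unfolding Q_integrand_def by auto
    then show ?thesis using b[OF s] by auto
  qed
  show ?thesis
    apply (rule exI[of _ s0], rule exI[of _ \<gamma>], rule exI[of _ "c/2"], rule exI[of _ C])
    using main h by auto
qed

lemma Q_integrand_integrable_near_0: "\<exists>s0>0. Q_integrand integrable_on {0..s0}"
proof -
  obtain s0 \<gamma> c C where h: "s0 > 0" "C > 0" "1 < \<gamma>"
    and b: "\<And>s. 0 < s \<Longrightarrow> s \<le> s0 \<Longrightarrow> Q_integrand s \<le> C * s powr (\<gamma>-2)"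
    using Q_integrand_powr_bounds by blast
  have spike: "negligible {x \<in> {0..s0} - {0<..s0}. f x \<noteq> 0}" "negligible {x \<in> {0<..s0} - {0..s0}. f x \<noteq> 0}"
    for f :: "real \<Rightarrow> real"
    by (auto intro: negligible_subset[OF negligible_sing[of 0]])
  have "(\<lambda>s. C * s powr (\<gamma>-2)) integrable_on {0..s0}"
    using integrable_on_cmult_left[OF integrable_on_powr_from_0[of "\<gamma>-2" s0], of C] h by simp
  then have dom: "(\<lambda>s. C * s powr (\<gamma>-2)) integrable_on {0<..s0}"
    using integrable_spike_set[OF _ spike(1,2)] by blast
  have "Q_integrand integrable_on {0<..s0}"
  proof (rule measurable_bounded_by_integrable_imp_integrable_real[OF _ dom])
    show "Q_integrand \<in> borel_measurable (lebesgue_on {0<..s0})"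
      by (rule continuous_imp_measurable_on_sets_lebesgue[OF continuous_on_subset[OF Q_integrand_continuous]]) auto
    show "\<bar>Q_integrand s\<bar> \<le> C * s powr (\<gamma>-2)" if "s \<in> {0<..s0}" for s
      using b[of s] Q_integrand_nonneg[of s] that by auto
  qed auto
  then show ?thesis using integrable_spike_set[OF _ spike(2,1)] h(1) by blast
qed

lemma Q_integrand_integrable: "Q_integrand integrable_on {0..\<rho>}"
proof -
  obtain s0 where s0: "s0 > 0" "Q_integrand integrable_on {0..s0}" using Q_integrand_integrable_near_0 by blast
  show ?thesis
  proof (cases "\<rho> \<le> s0")
    case True
    then show ?thesis using integrable_on_subinterval[OF s0(2), of 0 \<rho>] by simp
  next
    case False
    have "Q_integrand integrable_on {s0..\<rho>}"
      by (rule integrable_continuous_interval, rule continuous_on_subset[OF Q_integrand_continuous]) (use s0 in auto)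
    then show ?thesis
      using Henstock_Kurzweil_Integration.integrable_combine[of 0 s0 \<rho> Q_integrand] s0 False by simp
  qed
qed

abbreviation "Q \<equiv> Qf P P'"

lemma Q_0: "Q 0 = 0" unfolding Q_eq_integral by simp

lemma Q_continuous: "continuous_on {0..T} Q"
  unfolding Q_eq_integral by (rule indefinite_integral_continuous_1[OF Q_integrand_integrable])

lemma Q_diff_eq_integral: assumes "0 \<le> a" "a \<le> b" shows "Q b - Q a = integral {a..b} Q_integrand"
  using Henstock_Kurzweil_Integration.integral_combine[of 0 a b Q_integrand] Q_integrand_integrable[of b] assms unfolding Q_eq_integral by simp

lemma Q_nonneg: "\<rho> \<ge> 0 \<Longrightarrow> Q \<rho> \<ge> 0"
  unfolding Q_eq_integral by (rule integral_nonneg[OF Q_integrand_integrable]) (auto intro: Q_integrand_nonneg)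

lemma Q_integrand_lower_bound: "\<exists>c>0. \<forall>s. 0 < s \<and> s \<le> T \<longrightarrow> c \<le> Q_integrand s"
proof -
  obtain s0 \<gamma> c C where h: "s0 > 0" "c > 0" "C > 0" "1 < \<gamma>" "\<gamma> < 2"
    and b: "\<And>s. 0 < s \<Longrightarrow> s \<le> s0 \<Longrightarrow> c * s powr (\<gamma>-2) \<le> Q_integrand s \<and> Q_integrand s \<le> C * s powr (\<gamma>-2)"
    using Q_integrand_powr_bounds by blast
  define c1 where "c1 = c * s0 powr (\<gamma>-2)"
  have c1: "c1 > 0" unfolding c1_def using h by simp
  have l1: "c1 \<le> Q_integrand s" if "0 < s" "s \<le> s0" for s
  proof -
    have "s0 powr (\<gamma>-2) \<le> s powr (\<gamma>-2)" by (rule powr_mono2') (use that h in auto)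
    then have "c1 \<le> c * s powr (\<gamma>-2)" unfolding c1_def using h by simp
    then show ?thesis using b[OF that] by linarith
  qed
  show ?thesis
  proof (cases "T \<le> s0")
    case True then show ?thesis using l1 c1 by (intro exI[of _ c1]) auto
  next
    case False
    have "continuous_on {s0..T} Q_integrand" by (rule continuous_on_subset[OF Q_integrand_continuous]) (use h in auto)
    then obtain x where x: "x \<in> {s0..T}" "\<And>y. y \<in> {s0..T} \<Longrightarrow> Q_integrand x \<le> Q_integrand y"
      using continuous_attains_inf[OF compact_Icc _ \<open>continuous_on {s0..T} Q_integrand\<close>] False by auto
    have Ix: "Q_integrand x > 0" using Q_integrand_pos[of x] x h by auto
    show ?thesis
    proof (intro exI[of _ "min c1 (Q_integrand x)"] conjI allI impI)
      fix s assume s: "0 < s \<and> s \<le> T"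
      show "min c1 (Q_integrand x) \<le> Q_integrand s"
      proof (cases "s \<le> s0")
        case True then show ?thesis using l1[of s] s by auto
      next
        case False then show ?thesis using x(2)[of s] s by auto
      qed
    qed (use c1 Ix in auto)
  qed
qed

lemma Q_diff_lower_bound:
  "\<exists>c>0. \<forall>a b. 0 \<le> a \<and> a \<le> b \<and> b \<le> T \<longrightarrow> c * (b - a) \<le> Q b - Q a"
proof -
  obtain c where c: "c > 0" "\<And>s. 0 < s \<Longrightarrow> s \<le> T \<Longrightarrow> c \<le> Q_integrand s" using Q_integrand_lower_bound by blast
  have "c * (b - a) \<le> Q b - Q a" if ab: "0 \<le> a" "a \<le> b" "b \<le> T" for a b
  proof -
    define I' where "I' s = (if s = 0 then c else Q_integrand s)" for s
    have Iab: "Q_integrand integrable_on {a..b}" using integrable_on_subinterval[OF Q_integrand_integrable[of b]] ab by auto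
    have e: "integral {a..b} Q_integrand = integral {a..b} I'"
      by (rule integral_spike[of "{0}"]) (auto simp: I'_def)
    have I'i: "I' integrable_on {a..b}"
      by (rule integrable_spike[OF Iab, of "{0}"]) (auto simp: I'_def)
    have "integral {a..b} (\<lambda>s. c) \<le> integral {a..b} I'"
      by (rule integral_le[OF _ I'i]) (use ab c in \<open>auto simp: I'_def\<close>)
    then show ?thesis using Q_diff_eq_integral[OF ab(1,2)] e ab by (simp add: mult.commute)
  qed
  then show ?thesis using c by blast
qed

lemma P_linear_lower_bound: "\<exists>cs \<rho>1. 0 < cs \<and> cs \<le> 1 \<and> \<rho>1 > 0 \<and> (\<forall>\<rho>\<ge>\<rho>1. cs\<^sup>2 * \<rho> / 2 \<le> P \<rho>)"
proof -
  obtain cs c2 where h: "0 < cs" "cs \<le> 1" "c2 > 0"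
    and b: "\<And>p. p > 0 \<Longrightarrow> \<bar>p - cs\<^sup>2 * the_inv_into {0..} P p\<bar> \<le> c2 * sqrt p"
    using P_inverse_asymptotics by blast
  define \<rho>1 where "\<rho>1 = 2 * c2\<^sup>2 / cs\<^sup>2 + 1"
  have r1: "\<rho>1 > 0" unfolding \<rho>1_def using h by (simp add: add_pos_nonneg)
  have "cs\<^sup>2 * \<rho> / 2 \<le> P \<rho>" if r: "\<rho> \<ge> \<rho>1" for \<rho>
  proof (rule ccontr)
    assume c: "\<not> cs\<^sup>2 * \<rho> / 2 \<le> P \<rho>"
    have rp: "\<rho> > 0" using r r1 by simp
    have Pp: "P \<rho> > 0" using P_pos[OF rp] .
    have inv: "the_inv_into {0..} P (P \<rho>) = \<rho>"
      by (rule the_inv_into_f_f[OF bij_betw_imp_inj_on[OF P_bij]]) (use rp in simp)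
    have bb: "cs\<^sup>2 * \<rho> - P \<rho> \<le> c2 * sqrt (P \<rho>)" using b[OF Pp] unfolding inv by linarith
    define t where "t = sqrt (P \<rho>)"
    define u where "u = sqrt (cs\<^sup>2 * \<rho> / 2)"
    have up: "u > 0" unfolding u_def using h rp by simp
    have u2: "u\<^sup>2 = cs\<^sup>2 * \<rho> / 2" unfolding u_def using h rp by simp
    have tu: "t < u" unfolding t_def u_def using c by (simp add: real_sqrt_less_mono)
    have "u\<^sup>2 \<le> c2 * t" using bb c u2 unfolding t_def by linarith
    also have "\<dots> < c2 * u" using tu h by simp
    finally have "u * u < c2 * u" by (simp add: power2_eq_square)
    then have "u < c2" using up by simp
    then have "u\<^sup>2 < c2\<^sup>2" using up by (simp add: power_strict_mono)
    then have "cs\<^sup>2 * \<rho> < 2 * c2\<^sup>2" using u2 by simp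
    then have "\<rho> < 2 * c2\<^sup>2 / cs\<^sup>2" using h by (simp add: field_simps)
    then show False using r unfolding \<rho>1_def by simp
  qed
  then show ?thesis using h r1 by blast
qed

lemma P_diff_le_Q_diff:
  assumes ab: "0 < a" "a \<le> b"
  shows "(P b - P a) / (2*b) \<le> Q b - Q a"
proof -
  have ftc: "(P' has_integral (P b - P a)) {a..b}"
  proof (rule fundamental_theorem_of_calculus[OF ab(2)])
    fix x assume x: "x \<in> {a..b}"
    have "(P has_real_derivative P' x) (at x within {a..b})"
      using has_field_derivative_subset[OF P_has_derivative[of x], of "{a..b}"] x ab by fastforce
    then show "(P has_vector_derivative P' x) (at x within {a..b})"
      by (simp add: has_real_derivative_iff_has_vector_derivative)
  qed
  have i2: "((\<lambda>s. P' s / (2*b)) has_integral ((P b - P a) / (2*b))) {a..b}"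
    using has_integral_mult_left[OF ftc, of "1/(2*b)"] by simp
  have Iab: "Q_integrand integrable_on {a..b}"
    using integrable_on_subinterval[OF Q_integrand_integrable[of b]] ab by auto
  have le: "P' s / (2*b) \<le> Q_integrand s" if s: "s \<in> {a..b}" for s
  proof -
    have sp: "s > 0" using s ab by simp
    show ?thesis unfolding Q_integrand_def
      by (rule divide_left_mono) (use P_le_id[of s] P_pos[OF sp] P'_pos[OF sp] s sp in auto)
  qed
  have "integral {a..b} (\<lambda>s. P' s / (2*b)) \<le> integral {a..b} Q_integrand"
    by (rule integral_le[OF has_integral_integrable[OF i2] Iab le])
  then have "(P b - P a) / (2*b) \<le> integral {a..b} Q_integrand" unfolding integral_unique[OF i2] .
  also have "\<dots> = Q b - Q a" using Q_diff_eq_integral ab by simp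
  finally show ?thesis .
qed

lemma Q_dilation_increment:
  assumes cs: "0 < cs" "cs \<le> 1" and low: "\<And>\<rho>. \<rho> \<ge> \<rho>1 \<Longrightarrow> cs\<^sup>2 * \<rho> / 2 \<le> P \<rho>"
    and a: "a \<ge> \<rho>1" "\<rho>1 > 0"
  shows "cs\<^sup>2/8 \<le> Q ((4/cs\<^sup>2) * a) - Q a"
proof -
  define b where "b = (4/cs\<^sup>2) * a"
  have cs2: "cs\<^sup>2 > 0" "cs\<^sup>2 \<le> 1" using cs by (auto simp: power_le_one)
  have ap: "a > 0" using a by simp
  have ab: "a \<le> b" unfolding b_def using cs2 ap by (simp add: field_simps)
  have "P b \<ge> 2 * a"
  proof -
    have "cs\<^sup>2 * b / 2 \<le> P b" using low ab a by simp
    moreover have "cs\<^sup>2 * b / 2 = 2 * a" unfolding b_def using cs2 by (simp add: field_simps)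
    ultimately show ?thesis by simp
  qed
  then have "a / (2*b) \<le> (P b - P a) / (2*b)" using P_le_id[of a] ap ab by (intro divide_right_mono) auto
  also have "\<dots> \<le> Q b - Q a" by (rule P_diff_le_Q_diff[OF ap ab])
  finally show ?thesis unfolding b_def using ap cs2 by (simp add: field_simps)
qed

lemma Q_unbounded: "\<exists>\<rho>\<ge>0. Y \<le> Q \<rho>"
proof -
  obtain cs \<rho>1 where h: "0 < cs" "cs \<le> 1" "\<rho>1 > 0" and low: "\<And>\<rho>. \<rho> \<ge> \<rho>1 \<Longrightarrow> cs\<^sup>2 * \<rho> / 2 \<le> P \<rho>"
    using P_linear_lower_bound by blast
  define lm where "lm = 4/cs\<^sup>2"
  have cs2: "cs\<^sup>2 > 0" "cs\<^sup>2 \<le> 1" using h by (auto simp: power_le_one)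
  have lam: "lm \<ge> 1" unfolding lm_def using cs2 by (simp add: field_simps)
  have ind: "\<rho>1 * lm^n \<ge> \<rho>1 \<and> real n * (cs\<^sup>2/8) \<le> Q (\<rho>1 * lm^n)" for n
  proof (induction n)
    case 0 then show ?case using Q_nonneg h by simp
  next
    case (Suc n)
    have g: "\<rho>1 * lm^n \<ge> \<rho>1" using Suc by simp
    have "\<rho>1 * lm^Suc n = lm * (\<rho>1 * lm^n)" by simp
    moreover have "cs\<^sup>2/8 \<le> Q (lm * (\<rho>1 * lm^n)) - Q (\<rho>1 * lm^n)"
      using Q_dilation_increment[OF h(1,2) low g h(3)] unfolding lm_def by simp
    moreover have "\<rho>1 * lm^n \<le> lm * (\<rho>1 * lm^n)" using lam g h(3) mult_right_mono[OF lam, of "\<rho>1 * lm^n"] by simp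
    ultimately show ?case using Suc g by (auto simp: algebra_simps)
  qed
  obtain n :: nat where n: "Y / (cs\<^sup>2/8) < real n" using reals_Archimedean2 by blast
  have "Y \<le> real n * (cs\<^sup>2/8)" using n cs2 by (simp add: field_simps)
  then show ?thesis using ind[of n] h by (intro exI[of _ "\<rho>1 * lm^n"]) auto
qed

abbreviation "g \<equiv> gf P P'"

lemma Q_strict_mono: assumes "0 \<le> a" "a < b" shows "Q a < Q b"
proof -
  obtain c where c: "c > 0" "\<And>a' b'. 0 \<le> a' \<and> a' \<le> b' \<and> b' \<le> b \<longrightarrow> c * (b' - a') \<le> Q b' - Q a'"
    using Q_diff_lower_bound[of b] assms by auto
  have "c * (b - a) \<le> Q b - Q a" using c(2)[of a b] assms by simp
  moreover have "c * (b - a) > 0" using c assms by simp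
  ultimately show ?thesis by simp
qed

lemma Q_inj: "inj_on Q {0<..}"
proof (rule inj_onI)
  fix x y assume "x \<in> {0<..}" "y \<in> {0<..}" "Q x = Q y"
  then show "x = y" using Q_strict_mono[of x y] Q_strict_mono[of y x] by (cases x y rule: linorder_cases) auto
qed

lemma Q_image_pos: assumes "y > 0" shows "y \<in> Q ` {0<..}"
proof -
  obtain r where r: "r \<ge> 0" "y \<le> Q r" using Q_unbounded by blast
  obtain x where x: "0 \<le> x" "x \<le> r" "Q x = y"
    using IVT'[of Q 0 y r] Q_0 assms r Q_continuous[of r] by auto
  have "x \<noteq> 0" using x assms Q_0 by auto
  then show ?thesis using x by force
qed

lemma g_pos: assumes "y > 0" shows "g y > 0" "Q (g y) = y"
proof -
  have g: "g y = the_inv_into {0<..} Q y" unfolding gf_def using assms by simp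
  show "g y > 0" unfolding g using the_inv_into_into[OF Q_inj Q_image_pos[OF assms], of "{0<..}"] by simp
  show "Q (g y) = y" unfolding g by (rule f_the_inv_into_f[OF Q_inj Q_image_pos[OF assms]])
qed

lemma g_nonpos: "y \<le> 0 \<Longrightarrow> g y = 0" unfolding gf_def by simp

lemma g_nonneg: "g y \<ge> 0" using g_pos[of y] g_nonpos[of y] by (cases "y > 0") auto

lemma g_mono: assumes "a \<le> b" shows "g a \<le> g b"
proof (cases "a > 0")
  case True
  show ?thesis
  proof (rule ccontr)
    assume "\<not> g a \<le> g b"
    then have "Q (g b) < Q (g a)" using Q_strict_mono[of "g b" "g a"] g_pos[of b] True assms by simp
    then show False using g_pos[of a] g_pos[of b] True assms by simp
  qed
next
  case False then show ?thesis using g_nonpos[of a] g_nonneg[of b] by simp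
qed

lemma g_Lipschitz: "\<exists>L>0. \<forall>a b. a \<le> Y \<longrightarrow> b \<le> Y \<longrightarrow> \<bar>g a - g b\<bar> \<le> L * \<bar>a - b\<bar>"
proof (cases "Y > 0")
  case False
  then show ?thesis using g_nonpos by (intro exI[of _ 1]) auto
next
  case True
  define T where "T = g Y"
  have T: "T > 0" unfolding T_def using g_pos True by simp
  obtain c where c: "c > 0" "\<And>a b. 0 \<le> a \<and> a \<le> b \<and> b \<le> T \<longrightarrow> c * (b - a) \<le> Q b - Q a"
    using Q_diff_lower_bound[of T] by blast
  have key: "g b - g a \<le> (1/c) * (b - a)" if ab: "a \<le> b" "b \<le> Y" for a b
  proof (cases "b > 0")
    case False then show ?thesis using g_nonpos[of a] g_nonpos[of b] ab c(1) by simp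
  next
    case bp: True
    have gbT: "g b \<le> T" unfolding T_def by (rule g_mono[OF ab(2)])
    show ?thesis
    proof (cases "a > 0")
      case True
      have "c * (g b - g a) \<le> Q (g b) - Q (g a)"
        using c(2)[of "g a" "g b"] g_mono[OF ab(1)] g_nonneg[of a] gbT by simp
      then have "c * (g b - g a) \<le> b - a" using g_pos[OF True] g_pos[OF bp] by simp
      then show ?thesis using c by (simp add: field_simps)
    next
      case False
      have "c * (g b - 0) \<le> Q (g b) - Q 0" using c(2)[of 0 "g b"] g_nonneg[of b] gbT by simp
      then have "c * g b \<le> b" using g_pos[OF bp] Q_0 by simp
      then have "g b \<le> b / c" using c by (simp add: field_simps)
      also have "\<dots> \<le> (b - a) / c" using False c by (simp add: divide_right_mono)
      finally show ?thesis using g_nonpos[of a] False by simp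
    qed
  qed
  have "\<bar>g a - g b\<bar> \<le> (1/c) * \<bar>a - b\<bar>" if "a \<le> Y" "b \<le> Y" for a b
  proof (cases "a \<le> b")
    case True then show ?thesis using key[of a b] g_mono[of a b] that by (simp add: abs_if)
  next
    case False then show ?thesis using key[of b a] g_mono[of b a] that by (simp add: abs_if)
  qed
  then show ?thesis using c by (intro exI[of _ "1/c"]) auto
qed

lemma g_continuous: "continuous_on UNIV g"
proof -
  have "continuous (at x) g" for x
  proof -
    obtain L where L: "L > 0" "\<And>a b. a \<le> x + 1 \<Longrightarrow> b \<le> x + 1 \<Longrightarrow> \<bar>g a - g b\<bar> \<le> L * \<bar>a - b\<bar>"
      using g_Lipschitz[of "x+1"] by blast
    show ?thesis unfolding continuous_at_eps_delta
    proof (intro allI impI)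
      fix e :: real assume e: "e > 0"
      show "\<exists>d>0. \<forall>x'. dist x' x < d \<longrightarrow> dist (g x') (g x) < e"
      proof (intro exI[of _ "min 1 (e/(2*L))"] conjI allI impI)
        fix x' assume d: "dist x' x < min 1 (e/(2*L))"
        then have "x' \<le> x + 1" by (auto simp: dist_real_def)
        then have "\<bar>g x' - g x\<bar> \<le> L * \<bar>x' - x\<bar>" using L(2) by simp
        also have "\<dots> \<le> L * (e/(2*L))" using d L by (intro mult_left_mono) (auto simp: dist_real_def)
        also have "\<dots> < e" using L e by (simp add: field_simps)
        finally show "dist (g x') (g x) < e" by (simp add: dist_real_def)
      qed (use e L in auto)
    qed
  qed
  then show ?thesis by (simp add: continuous_at_imp_continuous_on)
qed

section \<open>Solutions of the TOV equation\<close>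

lemma tov_sol_initial: "tov_sol P P' \<kappa> y \<Longrightarrow> y 0 = \<kappa>" unfolding tov_sol_def by blast
lemma tov_sol_below_horizon: "tov_sol P P' \<kappa> y \<Longrightarrow> r > 0 \<Longrightarrow> 2 * massf P P' y r < r" unfolding tov_sol_def by blast
lemma tov_sol_has_derivative: "tov_sol P P' \<kappa> y \<Longrightarrow> r \<ge> 0 \<Longrightarrow>
   (y has_real_derivative tov_rhs (massf P P' y r) (P (g (y r))) r) (at r within {0..})"
  unfolding tov_sol_def tov_rhs_def by blast

lemma tov_sol_has_derivative_Icc: "tov_sol P P' \<kappa> y \<Longrightarrow> 0 \<le> a \<Longrightarrow> r \<in> {a..b} \<Longrightarrow>
   (y has_real_derivative tov_rhs (massf P P' y r) (P (g (y r))) r) (at r within {a..b})"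
  using has_field_derivative_subset[OF tov_sol_has_derivative[of \<kappa> y r], of "{a..b}"] by fastforce

lemma tov_sol_continuous: "tov_sol P P' \<kappa> y \<Longrightarrow> continuous_on {0..} y"
  unfolding continuous_on_eq_continuous_within using DERIV_continuous[OF tov_sol_has_derivative] by simp

lemma tov_sol_continuous_Icc: "tov_sol P P' \<kappa> y \<Longrightarrow> continuous_on {0..b} y"
  by (rule continuous_on_subset[OF tov_sol_continuous]) auto

lemma mass_integrand_continuous: "tov_sol P P' \<kappa> y \<Longrightarrow> continuous_on {0..b} (\<lambda>s. s\<^sup>2 * g (y s))"
proof -
  assume s: "tov_sol P P' \<kappa> y"
  have "continuous_on {0..b} (g \<circ> y)"
    by (rule continuous_on_compose[OF tov_sol_continuous_Icc[OF s]]) (rule continuous_on_subset[OF g_continuous], simp)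
  then show ?thesis by (intro continuous_intros) (simp add: o_def)
qed

lemma mass_has_derivative: assumes s: "tov_sol P P' \<kappa> y" and r: "r \<in> {0..b}"
  shows "(massf P P' y has_real_derivative 4 * pi * (r\<^sup>2 * g (y r))) (at r within {0..b})"
proof -
  have "((\<lambda>x. integral {0..x} (\<lambda>s. s\<^sup>2 * g (y s))) has_real_derivative r\<^sup>2 * g (y r)) (at r within {0..b})"
    by (rule integral_has_real_derivative[OF mass_integrand_continuous[OF s] r])
  then show ?thesis unfolding massf_def[abs_def] by (intro DERIV_cmult)
qed

lemma mass_has_derivative_Icc: assumes s: "tov_sol P P' \<kappa> y" and r: "r \<in> {a..b}" "0 \<le> a"
  shows "(massf P P' y has_real_derivative 4 * pi * (r\<^sup>2 * g (y r))) (at r within {a..b})"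
  using has_field_derivative_subset[OF mass_has_derivative[OF s, of r b], of "{a..b}"] r by fastforce

lemma mass_continuous: "tov_sol P P' \<kappa> y \<Longrightarrow> continuous_on {0..b} (massf P P' y)"
  unfolding continuous_on_eq_continuous_within using DERIV_continuous[OF mass_has_derivative] by blast

lemma mass_0: "massf P P' y 0 = 0" unfolding massf_def by simp

lemma mass_nonneg: "tov_sol P P' \<kappa> y \<Longrightarrow> r \<ge> 0 \<Longrightarrow> massf P P' y r \<ge> 0"
  unfolding massf_def
  by (intro mult_nonneg_nonneg integral_nonneg integrable_continuous_interval mass_integrand_continuous)
     (auto intro: g_nonneg)

lemma tov_rhs_nonpos: assumes s: "tov_sol P P' \<kappa> y" and r: "r \<ge> 0"
  shows "tov_rhs (massf P P' y r) (P (g (y r))) r \<le> 0"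
proof (cases "r = 0")
  case True then show ?thesis by (simp add: tov_rhs_0)
next
  case False
  then have rp: "r > 0" using r by simp
  have m: "massf P P' y r \<ge> 0" "2 * massf P P' y r < r" using mass_nonneg[OF s r] tov_sol_below_horizon[OF s rp] by auto
  have "1 - 2 * massf P P' y r / r > 0" using m rp by (simp add: field_simps)
  moreover have "massf P P' y r / r\<^sup>2 + 4 * pi * r * P (g (y r)) \<ge> 0"
    using m rp P_nonneg[OF g_nonneg] by simp
  ultimately show ?thesis unfolding tov_rhs_def by (simp add: mult_nonneg_nonneg)
qed

lemma tov_sol_antimono: assumes s: "tov_sol P P' \<kappa> y" and ab: "0 \<le> a" "a \<le> b"
  shows "y b \<le> y a"
proof (rule DERIV_nonpos_imp_decreasing_open[OF ab(2)])
  fix x assume x: "a < x" "x < b"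
  then have "x > 0" using ab by simp
  then have "at x within {0..} = at x" by (intro at_within_interior) simp
  then show "\<exists>z. (y has_real_derivative z) (at x) \<and> z \<le> 0"
    using tov_sol_has_derivative[OF s, of x] tov_rhs_nonpos[OF s, of x] \<open>x > 0\<close> by auto
next
  show "continuous_on {a..b} y" by (rule continuous_on_subset[OF tov_sol_continuous[OF s]]) (use ab in auto)
qed

lemma tov_sol_le_initial: "tov_sol P P' \<kappa> y \<Longrightarrow> r \<ge> 0 \<Longrightarrow> y r \<le> \<kappa>"
  using tov_sol_antimono[of \<kappa> y 0 r] tov_sol_initial by auto

end

section \<open>A one-parameter family of stars\<close>

locale tov_family = equation_of_state +
  fixes y :: "real \<Rightarrow> real \<Rightarrow> real" and R M :: "real \<Rightarrow> real" and \<kappa>0 :: real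
  assumes sol: "\<And>\<kappa>. \<kappa> > 0 \<Longrightarrow> tov_sol P P' \<kappa> (y \<kappa>)"
    and radius: "\<And>\<kappa>. \<kappa> > 0 \<Longrightarrow> R \<kappa> > 0 \<and> y \<kappa> (R \<kappa>) = 0"
    and mass: "\<And>\<kappa>. \<kappa> > 0 \<Longrightarrow> M \<kappa> = massf P P' (y \<kappa>) (R \<kappa>)"
    and k0: "\<kappa>0 > 0"
begin

abbreviation m where "m k \<equiv> massf P P' (y k)"

lemma M_pos: assumes k: "k > 0" shows "M k > 0"
proof -
  have s: "tov_sol P P' k (y k)" using sol k by simp
  have "continuous (at 0 within {0..}) (y k)" using tov_sol_continuous[OF s] by (simp add: continuous_on_eq_continuous_within)
  then obtain d where d: "d > 0" "\<And>r. r \<in> {0..} \<Longrightarrow> dist r 0 < d \<Longrightarrow> dist (y k r) (y k 0) < k/2"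
    unfolding continuous_within_eps_delta using k by (meson half_gt_zero)
  have y0: "y k 0 = k" using tov_sol_initial[OF s] .
  have yb: "y k r > k/2" if "0 \<le> r" "r < d" for r
  proof -
    have "\<bar>y k r - k\<bar> < k/2" using d(2)[of r] that y0 by (auto simp: dist_real_def)
    then show ?thesis unfolding abs_less_iff by linarith
  qed
  have Rk: "R k > 0" "y k (R k) = 0" using radius k by auto
  have Rd: "R k \<ge> d" using yb[of "R k"] Rk k by force
  define r1 where "r1 = d/2"
  have r1: "0 < r1" "r1 < d" "r1 \<le> R k" unfolding r1_def using d Rd by auto
  have "m k 0 < m k r1"
  proof (rule DERIV_pos_imp_increasing_open[OF r1(1)])
    fix x assume x: "0 < x" "x < r1"
    have "(m k has_real_derivative 4 * pi * (x\<^sup>2 * g (y k x))) (at x)"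
      using mass_has_derivative[OF s, of x r1] at_within_Icc_at[of 0 x r1] x by simp
    moreover have "4 * pi * (x\<^sup>2 * g (y k x)) > 0" using g_pos(1)[of "y k x"] yb[of x] x r1 k by simp
    ultimately show "\<exists>z. (m k has_real_derivative z) (at x) \<and> z > 0" by blast
  next
    show "continuous_on {0..r1} (m k)" by (rule mass_continuous[OF s])
  qed
  moreover have "m k r1 \<le> m k (R k)"
  proof (rule DERIV_nonneg_imp_increasing_open[OF r1(3)])
    fix x assume x: "r1 < x" "x < R k"
    have "(m k has_real_derivative 4 * pi * (x\<^sup>2 * g (y k x))) (at x)"
      using mass_has_derivative[OF s, of x "R k"] at_within_Icc_at[of 0 x "R k"] x r1 by simp
    moreover have "4 * pi * (x\<^sup>2 * g (y k x)) \<ge> 0" using g_nonneg[of "y k x"] by simp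
    ultimately show "\<exists>z. (m k has_real_derivative z) (at x) \<and> z \<ge> 0" by blast
  next
    show "continuous_on {r1..R k} (m k)" by (rule continuous_on_subset[OF mass_continuous[OF s, of "R k"]]) (use r1 in auto)
  qed
  ultimately show ?thesis using mass_0 mass[OF k] by simp
qed

definition "y_max = \<kappa>0 + 1"
definition "L_g = (SOME L. L > 0 \<and> (\<forall>a b. a \<le> y_max \<longrightarrow> b \<le> y_max \<longrightarrow> \<bar>g a - g b\<bar> \<le> L * \<bar>a - b\<bar>))"

lemma L_g_Lipschitz: "L_g > 0" "\<And>a b. a \<le> y_max \<Longrightarrow> b \<le> y_max \<Longrightarrow> \<bar>g a - g b\<bar> \<le> L_g * \<bar>a - b\<bar>"
proof -
  have "L_g > 0 \<and> (\<forall>a b. a \<le> y_max \<longrightarrow> b \<le> y_max \<longrightarrow> \<bar>g a - g b\<bar> \<le> L_g * \<bar>a - b\<bar>)"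
    unfolding L_g_def by (rule someI_ex[OF g_Lipschitz])
  then show "L_g > 0" "\<And>a b. a \<le> y_max \<Longrightarrow> b \<le> y_max \<Longrightarrow> \<bar>g a - g b\<bar> \<le> L_g * \<bar>a - b\<bar>" by auto
qed

definition "g_max = L_g * y_max"

lemma y_max_pos: "y_max > 0" unfolding y_max_def using k0 by simp
lemma g_max_pos: "g_max > 0" unfolding g_max_def using L_g_Lipschitz y_max_pos by simp

lemma g_le_g_max: assumes "a \<le> y_max" shows "g a \<le> g_max"
proof (cases "a > 0")
  case True
  have "\<bar>g a - g 0\<bar> \<le> L_g * \<bar>a - 0\<bar>" using L_g_Lipschitz(2)[of a 0] assms y_max_pos by simp
  then have "g a \<le> L_g * a" using g_nonpos[of 0] True by simp
  also have "\<dots> \<le> L_g * y_max" using assms L_g_Lipschitz by simp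
  finally show ?thesis unfolding g_max_def .
next
  case False then show ?thesis using g_nonpos g_max_pos by simp
qed

lemma P_g_Lipschitz: "a \<le> y_max \<Longrightarrow> b \<le> y_max \<Longrightarrow> \<bar>P (g a) - P (g b)\<bar> \<le> L_g * \<bar>a - b\<bar>"
  using P_Lipschitz[OF g_nonneg g_nonneg, of a b] L_g_Lipschitz(2)[of a b] by linarith

definition "admissible k \<longleftrightarrow> 0 < k \<and> k \<le> y_max"

lemma admissible_sol: "admissible k \<Longrightarrow> tov_sol P P' k (y k)" unfolding admissible_def using sol by simp
lemma admissible_kappa0: "admissible \<kappa>0" unfolding admissible_def y_max_def using k0 by simp

lemma admissible_y_le: "admissible k \<Longrightarrow> r \<ge> 0 \<Longrightarrow> y k r \<le> y_max"
  using tov_sol_le_initial[OF admissible_sol] unfolding admissible_def by force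

lemma admissible_g_bounds: "admissible k \<Longrightarrow> r \<ge> 0 \<Longrightarrow> 0 \<le> g (y k r) \<and> g (y k r) \<le> g_max"
  using g_nonneg g_le_g_max admissible_y_le by blast

lemma admissible_P_bounds: "admissible k \<Longrightarrow> r \<ge> 0 \<Longrightarrow> 0 \<le> P (g (y k r)) \<and> P (g (y k r)) \<le> g_max"
  using P_nonneg[OF g_nonneg] P_le_id[OF g_nonneg] admissible_g_bounds by (meson order_trans)

lemma admissible_mass_bounds: assumes k: "admissible k" and r: "r \<ge> 0" shows "0 \<le> m k r \<and> m k r \<le> 4*pi*g_max*r^3"
proof -
  have s: "tov_sol P P' k (y k)" by (rule admissible_sol[OF k])
  have "\<bar>m k r - m k 0\<bar> \<le> (4*pi*(r\<^sup>2*g_max)) * \<bar>r - 0\<bar>"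
  proof (rule abs_diff_le_of_derivative_bound[where a=0 and b=r])
    fix x assume x: "x \<in> {0..r}"
    show "(m k has_real_derivative 4 * pi * (x\<^sup>2 * g (y k x))) (at x within {0..r})" by (rule mass_has_derivative[OF s x])
    have "x\<^sup>2 * g (y k x) \<le> r\<^sup>2 * g_max" using admissible_g_bounds[OF k, of x] x by (intro mult_mono power_mono) auto
    moreover have "0 \<le> g (y k x)" using admissible_g_bounds[OF k, of x] x by simp
    ultimately show "\<bar>4 * pi * (x\<^sup>2 * g (y k x))\<bar> \<le> 4*pi*(r\<^sup>2*g_max)" by simp
  qed (use r in auto)
  moreover have "4*pi*(r\<^sup>2*g_max) * \<bar>r - 0\<bar> = 4*pi*g_max*r^3" using r by (simp add: power2_eq_square power3_eq_cube)
  ultimately have "\<bar>m k r - m k 0\<bar> \<le> 4*pi*g_max*r^3" by linarith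
  then show ?thesis using mass_0 mass_nonneg[OF s r] by simp
qed

definition "r_max = R \<kappa>0 + 1"
lemma r_max_bounds: "r_max > 1" "R \<kappa>0 < r_max" "R \<kappa>0 > 0" unfolding r_max_def using radius[OF k0] by auto

lemma admissible_margin_near_centre:
  assumes k: "admissible k" and r: "0 < r" "r * (16*pi*g_max + 1) \<le> 1"
  shows "(1/2) * r \<le> r - 2 * m k r"
proof -
  have "0 \<le> pi*g_max*r" using r g_max_pos by simp
  then have r_le: "8*pi*g_max*r \<le> 1/2" "r \<le> 1" using r by (simp_all add: algebra_simps)
  have "m k r \<le> 4*pi*g_max*r^3" using admissible_mass_bounds[OF k, of r] r by simp
  moreover have "8*pi*g_max*r^2 \<le> 1/2"
  proof -
    have "r^2 \<le> r" using r r_le by (simp add: power2_eq_square mult_le_cancel_right1)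
    then have "8*pi*g_max*r^2 \<le> 8*pi*g_max*r" using g_max_pos by simp
    then show ?thesis using r_le by linarith
  qed
  moreover have "2*(4*pi*g_max*r^3) = (8*pi*g_max*r^2) * r" by (simp add: power2_eq_square power3_eq_cube)
  ultimately have "2 * m k r \<le> (1/2) * r" using r by (smt (verit) mult_right_mono)
  then show ?thesis by simp
qed

lemma margin_exists: "\<exists>b. 0 < b \<and> b \<le> 1/2 \<and> (\<forall>r. 0 < r \<and> r \<le> r_max \<longrightarrow> b * r \<le> r - 2 * m \<kappa>0 r)"
proof -
  have s: "tov_sol P P' \<kappa>0 (y \<kappa>0)" by (rule sol[OF k0])
  define r1 where "r1 = 1 / (16*pi*g_max + 1)"
  have den: "16*pi*g_max + 1 > 0" using g_max_pos by (simp add: add_pos_pos)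
  have r1: "0 < r1" unfolding r1_def using den by simp
  have small: "(1/2) * r \<le> r - 2 * m \<kappa>0 r" if r: "0 < r" "r \<le> r1" for r
  proof (rule admissible_margin_near_centre[OF admissible_kappa0 r(1)])
    show "r * (16*pi*g_max + 1) \<le> 1" using r den unfolding r1_def by (simp add: field_simps)
  qed
  show ?thesis
  proof (cases "r_max \<le> r1")
    case True then show ?thesis using small by (intro exI[of _ "1/2"]) auto
  next
    case False
    define \<psi> where "\<psi> r = (r - 2 * m \<kappa>0 r) / r" for r
    have c: "continuous_on {r1..r_max} \<psi>" unfolding \<psi>_def
      using r1 by (intro continuous_intros continuous_on_subset[OF mass_continuous[OF s, of "r_max"]]) auto
    obtain x where x: "x \<in> {r1..r_max}" "\<And>z. z \<in> {r1..r_max} \<Longrightarrow> \<psi> x \<le> \<psi> z"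
      using continuous_attains_inf[OF compact_Icc _ c] False by auto
    have xp: "x > 0" using x r1 by simp
    have "\<psi> x > 0" unfolding \<psi>_def using tov_sol_below_horizon[OF s xp] xp by simp
    show ?thesis
    proof (intro exI[of _ "min (1/2) (\<psi> x)"] conjI allI impI)
      fix r assume r: "0 < r \<and> r \<le> r_max"
      show "min (1/2) (\<psi> x) * r \<le> r - 2 * m \<kappa>0 r"
      proof (cases "r \<le> r1")
        case True
        then show ?thesis using small[of r] r by (smt (verit) mult_right_mono min.cobounded1)
      next
        case False
        then have "\<psi> x \<le> \<psi> r" using x(2)[of r] r by auto
        then have "\<psi> x * r \<le> r - 2 * m \<kappa>0 r" unfolding \<psi>_def using r by (simp add: field_simps)
        then show ?thesis using r by (smt (verit) mult_right_mono min.cobounded2)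
      qed
    qed (use \<open>\<psi> x > 0\<close> in auto)
  qed
qed

definition "\<beta>0 = (SOME b. 0 < b \<and> b \<le> 1/2 \<and> (\<forall>r. 0 < r \<and> r \<le> r_max \<longrightarrow> b * r \<le> r - 2 * m \<kappa>0 r))"
lemma beta0_margin: "0 < \<beta>0" "\<beta>0 \<le> 1/2" "\<And>r. 0 < r \<Longrightarrow> r \<le> r_max \<Longrightarrow> \<beta>0 * r \<le> r - 2 * m \<kappa>0 r"
  using someI_ex[OF margin_exists] unfolding \<beta>0_def[symmetric] by auto


definition "\<beta> = \<beta>0 / 2"
definition "C_m = 4*pi*g_max"
definition "K1 = (1 + 8*pi*r_max\<^sup>2*g_max)/\<beta>\<^sup>2"
definition "K2 = (4*pi*r_max + 8*pi*C_m*r_max^3)/\<beta>\<^sup>2"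
text \<open>Half the margin of the star \<open>\<kappa>0\<close>: nearby stars inherit it (\<open>horizon_margin_near_kappa0\<close>),
  and under it the right-hand side is Lipschitz in \<open>(m, p)\<close> with weights \<open>K1/r\<^sup>2\<close> and \<open>K2\<close>.\<close>
definition "horizon_margin k t \<longleftrightarrow> (\<forall>r. 0 < r \<and> r \<le> t \<longrightarrow> \<beta>*r \<le> r - 2 * m k r)"
definition "y_diff k r = y k r - y \<kappa>0 r"
definition "m_diff k r = m k r - m \<kappa>0 r"

lemma beta_bounds: "\<beta> > 0" "\<beta> \<le> \<beta>0" unfolding \<beta>_def using beta0_margin by auto
lemma K_nonneg: "K1 \<ge> 0" "K2 \<ge> 0" "C_m > 0"
  unfolding K1_def K2_def C_m_def using g_max_pos r_max_bounds by (auto intro!: divide_nonneg_nonneg add_nonneg_nonneg)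

lemma horizon_margin_mono: "horizon_margin k t \<Longrightarrow> t' \<le> t \<Longrightarrow> horizon_margin k t'"
  unfolding horizon_margin_def by auto

lemma tov_rhs_diff_bound:
  assumes k: "admissible k" and c: "horizon_margin k t" and x: "0 < x" "x \<le> t" and t: "t \<le> r_max"
  shows "\<bar>tov_rhs (m k x) (P (g (y k x))) x - tov_rhs (m \<kappa>0 x) (P (g (y \<kappa>0 x))) x\<bar>
         \<le> K1 * (\<bar>m_diff k x\<bar>/x\<^sup>2) + K2 * L_g * \<bar>y_diff k x\<bar>"
proof -
  have xT: "x \<le> r_max" using x t by simp
  have "\<bar>tov_rhs (m k x) (P (g (y k x))) x - tov_rhs (m \<kappa>0 x) (P (g (y \<kappa>0 x))) x\<bar>
     \<le> (1 + 8*pi*r_max\<^sup>2*g_max)/\<beta>\<^sup>2 * (\<bar>m k x - m \<kappa>0 x\<bar>/x\<^sup>2)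
       + (4*pi*r_max + 8*pi*C_m*r_max^3)/\<beta>\<^sup>2 * \<bar>P (g (y k x)) - P (g (y \<kappa>0 x))\<bar>"
  proof (rule tov_rhs_Lipschitz[OF x(1) xT])
    show "0 \<le> m k x" "m k x \<le> C_m * x^3" using admissible_mass_bounds[OF k, of x] x unfolding C_m_def by auto
    show "0 \<le> P (g (y k x))" "P (g (y k x)) \<le> g_max" using admissible_P_bounds[OF k, of x] x by auto
    show "\<beta> * x \<le> x - 2 * m k x" using c x unfolding horizon_margin_def by auto
    have "\<beta> * x \<le> \<beta>0 * x" using beta_bounds x by simp
    then show "\<beta> * x \<le> x - 2 * m \<kappa>0 x" using beta0_margin(3)[OF x(1) xT] by linarith
    show "\<beta> > 0" by (rule beta_bounds(1))
  qed
  also have "\<dots> \<le> K1 * (\<bar>m_diff k x\<bar>/x\<^sup>2) + K2 * (L_g * \<bar>y_diff k x\<bar>)"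
    unfolding K1_def[symmetric] K2_def[symmetric] m_diff_def y_diff_def
    using P_g_Lipschitz[OF admissible_y_le[OF k] admissible_y_le[OF admissible_kappa0], of x x] x K_nonneg by (intro add_mono mult_left_mono) auto
  finally show ?thesis by (simp add: mult.assoc)
qed

lemma y_diff_has_derivative: assumes k: "admissible k" and ab: "0 \<le> a" and x: "x \<in> {a..b}"
  shows "(y_diff k has_real_derivative tov_rhs (m k x) (P (g (y k x))) x - tov_rhs (m \<kappa>0 x) (P (g (y \<kappa>0 x))) x) (at x within {a..b})"
  unfolding y_diff_def[abs_def]
  by (intro DERIV_diff tov_sol_has_derivative_Icc[OF admissible_sol[OF k] ab x]
      tov_sol_has_derivative_Icc[OF admissible_sol[OF admissible_kappa0] ab x])

lemma m_diff_has_derivative: assumes k: "admissible k" and ab: "0 \<le> a" and x: "x \<in> {a..b}"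
  shows "(m_diff k has_real_derivative 4 * pi * (x\<^sup>2 * g (y k x)) - 4 * pi * (x\<^sup>2 * g (y \<kappa>0 x))) (at x within {a..b})"
  unfolding m_diff_def[abs_def]
  by (intro DERIV_diff mass_has_derivative_Icc[OF admissible_sol[OF k] x ab] mass_has_derivative_Icc[OF admissible_sol[OF admissible_kappa0] x ab])

lemma y_diff_continuous: "admissible k \<Longrightarrow> continuous_on {0..b} (y_diff k)"
  unfolding y_diff_def[abs_def] using tov_sol_continuous_Icc[OF admissible_sol] admissible_kappa0 by (intro continuous_intros) auto

lemma m_diff_continuous: "admissible k \<Longrightarrow> continuous_on {0..b} (m_diff k)"
  unfolding m_diff_def[abs_def] using mass_continuous[OF admissible_sol] admissible_kappa0 by (intro continuous_intros) auto

lemma y_diff_0: "admissible k \<Longrightarrow> y_diff k 0 = k - \<kappa>0"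
  unfolding y_diff_def using tov_sol_initial[OF admissible_sol] admissible_kappa0 by simp

lemma m_diff_0: "m_diff k 0 = 0" unfolding m_diff_def using mass_0 by simp

lemma m_diff_increment:
  assumes k: "admissible k" and ab: "0 \<le> a" "a \<le> b" and W: "\<And>u. u \<in> {a..b} \<Longrightarrow> \<bar>y_diff k u\<bar> \<le> W"
  shows "\<bar>m_diff k b - m_diff k a\<bar> \<le> 4*pi*b\<^sup>2*L_g*W * (b - a)"
proof -
  have "\<bar>m_diff k b - m_diff k a\<bar> \<le> (4*pi*b\<^sup>2*L_g*W) * \<bar>b - a\<bar>"
  proof (rule abs_diff_le_of_derivative_bound[where a=a and b=b])
    fix x assume x: "x \<in> {a..b}"
    show "(m_diff k has_real_derivative 4 * pi * (x\<^sup>2 * g (y k x)) - 4 * pi * (x\<^sup>2 * g (y \<kappa>0 x))) (at x within {a..b})"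
      by (rule m_diff_has_derivative[OF k ab(1) x])
    have xx: "0 \<le> x" "x \<le> b" using x ab by auto
    have "\<bar>4 * pi * (x\<^sup>2 * g (y k x)) - 4 * pi * (x\<^sup>2 * g (y \<kappa>0 x))\<bar> = 4*pi*x\<^sup>2 * \<bar>g (y k x) - g (y \<kappa>0 x)\<bar>"
      by (simp add: abs_mult right_diff_distrib[symmetric] mult.assoc)
    also have "\<dots> \<le> 4*pi*b\<^sup>2 * (L_g * W)"
    proof (rule mult_mono)
      show "4*pi*x\<^sup>2 \<le> 4*pi*b\<^sup>2" using xx by (simp add: power_mono)
      have "\<bar>g (y k x) - g (y \<kappa>0 x)\<bar> \<le> L_g * \<bar>y k x - y \<kappa>0 x\<bar>"
        using L_g_Lipschitz(2)[OF admissible_y_le[OF k xx(1)] admissible_y_le[OF admissible_kappa0 xx(1)]] .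
      also have "\<dots> \<le> L_g * W" using W[OF x] L_g_Lipschitz unfolding y_diff_def by simp
      finally show "\<bar>g (y k x) - g (y \<kappa>0 x)\<bar> \<le> L_g * W" .
    qed auto
    finally show "\<bar>4 * pi * (x\<^sup>2 * g (y k x)) - 4 * pi * (x\<^sup>2 * g (y \<kappa>0 x))\<bar> \<le> 4*pi*b\<^sup>2*L_g*W"
      by (simp add: mult.assoc)
  qed (use ab in auto)
  then show ?thesis using ab by simp
qed

lemma m_diff_bound:
  assumes k: "admissible k" and x: "0 \<le> x" and W: "\<And>u. u \<in> {0..x} \<Longrightarrow> \<bar>y_diff k u\<bar> \<le> W"
  shows "\<bar>m_diff k x\<bar> \<le> 4*pi*L_g*W * x^3"
  using m_diff_increment[OF k order_refl x W] m_diff_0 by (simp add: power2_eq_square power3_eq_cube mult_ac)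

lemma y_diff_increment:
  assumes k: "admissible k" and c: "horizon_margin k b" and ab: "0 \<le> a" "a \<le> b" "b \<le> r_max"
    and B: "\<And>x. x \<in> {a..b} \<Longrightarrow> 0 < x \<Longrightarrow> K1 * (\<bar>m_diff k x\<bar>/x\<^sup>2) + K2 * L_g * \<bar>y_diff k x\<bar> \<le> B"
    and B0: "B \<ge> 0" and u: "u \<in> {a..b}" "v \<in> {a..b}"
  shows "\<bar>y_diff k u - y_diff k v\<bar> \<le> B * \<bar>u - v\<bar>"
proof (rule abs_diff_le_of_derivative_bound[OF y_diff_has_derivative[OF k ab(1)] _ u])
  fix x assume x: "x \<in> {a..b}"
  show "\<bar>tov_rhs (m k x) (P (g (y k x))) x - tov_rhs (m \<kappa>0 x) (P (g (y \<kappa>0 x))) x\<bar> \<le> B"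
  proof (cases "x = 0")
    case True then show ?thesis using B0 by (simp add: tov_rhs_0)
  next
    case False
    then have xp: "0 < x" using x ab by simp
    show ?thesis using tov_rhs_diff_bound[OF k c xp _ ab(3)] B[OF x xp] x by auto
  qed
qed

subsection \<open>Comparison near the centre\<close>

definition "Kf = K1*4*pi*L_g*r_max + K2*L_g"
definition "\<delta>f = 1/(2*Kf+1)"
definition "Nf = nat \<lceil>r_max/\<delta>f\<rceil>"

lemma forward_step_size: "Kf \<ge> 0" "\<delta>f > 0" "Kf * \<delta>f \<le> 1/2" "r_max \<le> real Nf * \<delta>f"
proof -
  show kf: "Kf \<ge> 0" unfolding Kf_def using K_nonneg L_g_Lipschitz r_max_bounds by simp
  show df: "\<delta>f > 0" unfolding \<delta>f_def using kf by simp
  show "Kf * \<delta>f \<le> 1/2" unfolding \<delta>f_def using kf by (simp add: field_simps)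
  have "r_max/\<delta>f \<le> real Nf" unfolding Nf_def by linarith
  then show "r_max \<le> real Nf * \<delta>f" using df by (simp add: field_simps)
qed

text \<open>Near the centre the singular weight \<open>K1/r\<^sup>2\<close> is compensated by \<open>m_diff = O(r\<^sup>3)\<close>.\<close>
lemma tov_rhs_diff_forward_bound:
  assumes k: "admissible k" and b: "b \<le> r_max" and W0: "W \<ge> 0"
    and W: "\<And>u. u \<in> {0..b} \<Longrightarrow> \<bar>y_diff k u\<bar> \<le> W" and z: "0 < z" "z \<le> b"
  shows "K1 * (\<bar>m_diff k z\<bar>/z\<^sup>2) + K2 * L_g * \<bar>y_diff k z\<bar> \<le> Kf * W"
proof -
  have dmz: "\<bar>m_diff k z\<bar> \<le> 4*pi*L_g*W * z^3"
    by (rule m_diff_bound[OF k]) (use z W in auto)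
  have "K1 * (\<bar>m_diff k z\<bar>/z\<^sup>2) \<le> K1 * (4*pi*L_g*W*z)"
  proof (rule mult_left_mono[OF _ K_nonneg(1)])
    have "\<bar>m_diff k z\<bar>/z\<^sup>2 \<le> (4*pi*L_g*W * z^3)/z\<^sup>2" using dmz z by (simp add: divide_right_mono)
    also have "\<dots> = 4*pi*L_g*W*z" using z by (simp add: power2_eq_square power3_eq_cube)
    finally show "\<bar>m_diff k z\<bar>/z\<^sup>2 \<le> 4*pi*L_g*W*z" .
  qed
  also have "\<dots> \<le> K1 * (4*pi*L_g*W*r_max)"
    using z b K_nonneg L_g_Lipschitz W0 by (intro mult_left_mono) auto
  finally have a1: "K1 * (\<bar>m_diff k z\<bar>/z\<^sup>2) \<le> K1 * (4*pi*L_g*W*r_max)" .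
  have a2: "K2 * L_g * \<bar>y_diff k z\<bar> \<le> K2 * L_g * W"
    using W[of z] z K_nonneg L_g_Lipschitz by (intro mult_left_mono) auto
  show ?thesis using a1 a2 unfolding Kf_def by (simp add: algebra_simps)
qed

lemma y_diff_forward_bound:
  assumes k: "admissible k" and t: "0 \<le> t" "t \<le> r_max" and c: "horizon_margin k t" and r: "r \<in> {0..t}"
  shows "\<bar>y_diff k r\<bar> \<le> 2^Nf * \<bar>k - \<kappa>0\<bar>"
proof -
  have "\<bar>y_diff k r\<bar> \<le> 2^Nf * \<bar>y_diff k 0\<bar>"
  proof (rule stepwise_doubling_bound[where D="\<lambda>r. \<bar>y_diff k r\<bar>" and \<delta>=\<delta>f and a=0 and b=t and n=Nf])
    show "continuous_on {0..t} (\<lambda>r. \<bar>y_diff k r\<bar>)" using y_diff_continuous[OF k] by (intro continuous_intros)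
    show "t - 0 \<le> real Nf * \<delta>f" using forward_step_size t by simp
  next
    fix s t' W x
    assume h: "0 \<le> s" "s \<le> t'" "t' \<le> t" "t' - s \<le> \<delta>f" "\<forall>r\<in>{0..t'}. \<bar>y_diff k r\<bar> \<le> W" "x \<in> {s..t'}"
    have W0: "W \<ge> 0" using h(5) h(1,2) by (meson abs_ge_zero atLeastAtMost_iff order_refl order_trans)
    have "\<bar>y_diff k x - y_diff k s\<bar> \<le> (Kf * W) * \<bar>x - s\<bar>"
    proof (rule y_diff_increment[OF k horizon_margin_mono[OF c] h(1)])
      show "x \<le> t" using h by simp
      show "s \<le> x" using h by simp
      show "x \<le> r_max" using h t by simp
      show "Kf * W \<ge> 0" using forward_step_size W0 by simp
      show "x \<in> {s..x}" "s \<in> {s..x}" using h by auto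
    next
      fix z assume "z \<in> {s..x}" "0 < z"
      then show "K1 * (\<bar>m_diff k z\<bar>/z\<^sup>2) + K2 * L_g * \<bar>y_diff k z\<bar> \<le> Kf * W"
        using tov_rhs_diff_forward_bound[OF k _ W0, of t' z] h t by auto
    qed
    also have "\<dots> \<le> (Kf * W) * \<delta>f" using h forward_step_size W0 by (intro mult_left_mono) auto
    also have "\<dots> = (Kf * \<delta>f) * W" by simp
    also have "\<dots> \<le> (1/2) * W" using forward_step_size W0 by (intro mult_right_mono) auto
    finally have "\<bar>y_diff k x - y_diff k s\<bar> \<le> (1/2) * W" .
    then show "\<bar>y_diff k x\<bar> \<le> \<bar>y_diff k s\<bar> + W/2" using abs_triangle_ineq2[of "y_diff k x" "y_diff k s"] by linarith
  qed (use forward_step_size t r in auto)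
  then show ?thesis using y_diff_0[OF k] by simp
qed


text \<open>While \<open>|y_diff| \<le> tol\<close>, the mass differs from that of \<open>\<kappa>0\<close> by at most \<open>\<beta> r / 2\<close>, so the
  margin \<open>\<beta>\<close> persists; for \<open>|\<kappa> - \<kappa>0| \<le> \<eta>\<close> the forward bound keeps \<open>|y_diff| \<le> tol/2\<close>.\<close>
definition "tol = \<beta>/(8*pi*L_g*r_max\<^sup>2)"
definition "\<eta> = tol/(2*2^Nf)"

lemma tol_eta_props: "tol > 0" "4*pi*L_g*tol*r_max\<^sup>2 = \<beta>/2" "\<eta> > 0" "2^Nf * \<eta> = tol/2"
  unfolding tol_def \<eta>_def using beta_bounds L_g_Lipschitz r_max_bounds by (auto simp: field_simps)

lemma horizon_margin_of_small_y_diff: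
  assumes k: "admissible k" and t: "0 \<le> t" "t \<le> r_max" and W: "\<And>u. u \<in> {0..t} \<Longrightarrow> \<bar>y_diff k u\<bar> \<le> tol"
  shows "horizon_margin k t"
  unfolding horizon_margin_def
proof (intro allI impI)
  fix r assume r: "0 < r \<and> r \<le> t"
  have "\<bar>m_diff k r\<bar> \<le> 4*pi*L_g*tol * r^3" by (rule m_diff_bound[OF k]) (use r W in auto)
  also have "\<dots> = (4*pi*L_g*tol) * (r\<^sup>2 * r)" by (simp add: power2_eq_square power3_eq_cube)
  also have "\<dots> \<le> (4*pi*L_g*tol) * (r_max\<^sup>2 * r)"
    using r t tol_eta_props L_g_Lipschitz by (intro mult_left_mono mult_right_mono power_mono) auto
  also have "\<dots> = \<beta>/2 * r" using tol_eta_props(2) by (simp add: algebra_simps)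
  finally have "\<bar>m_diff k r\<bar> \<le> \<beta>/2 * r" .
  moreover have "\<beta>0 * r \<le> r - 2 * m \<kappa>0 r" using beta0_margin(3)[of r] r t by simp
  moreover have "\<beta>0 * r = 2 * (\<beta> * r)" unfolding \<beta>_def by simp
  moreover have "\<beta>/2 * r = (\<beta> * r)/2" by simp
  ultimately show "\<beta>*r \<le> r - 2 * m k r" unfolding m_diff_def abs_le_iff by linarith
qed

lemma horizon_margin_near_kappa0:
  assumes k: "admissible k" and h: "\<bar>k - \<kappa>0\<bar> \<le> \<eta>"
  shows "horizon_margin k r_max"
proof -
  have "\<bar>y_diff k r\<bar> < tol" if r: "r \<in> {0..r_max}" for r
  proof (rule continuity_bootstrap[where D="\<lambda>r. \<bar>y_diff k r\<bar>", OF _ _ _ r])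
    show "continuous_on {0..r_max} (\<lambda>r. \<bar>y_diff k r\<bar>)"
      using y_diff_continuous[OF k] by (intro continuous_intros)
    have "\<eta> \<le> 2^Nf * \<eta>" using tol_eta_props(3) by simp
    then show "\<bar>y_diff k 0\<bar> < tol" using y_diff_0[OF k] h tol_eta_props by simp
  next
    fix t assume t: "t \<in> {0..r_max}" and small: "\<forall>r\<in>{0..t}. \<bar>y_diff k r\<bar> \<le> tol"
    have margin: "horizon_margin k t"
      by (rule horizon_margin_of_small_y_diff[OF k]) (use t small in auto)
    have "\<bar>y_diff k t\<bar> \<le> 2^Nf * \<bar>k - \<kappa>0\<bar>" using y_diff_forward_bound[OF k _ _ margin] t by auto
    also have "\<dots> \<le> 2^Nf * \<eta>" using h by simp
    finally show "\<bar>y_diff k t\<bar> < tol" using tol_eta_props by simp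
  qed
  then show ?thesis by (intro horizon_margin_of_small_y_diff[OF k]) (use r_max_bounds in \<open>auto intro: less_imp_le\<close>)
qed

lemma y_diff_near_centre_lower_bound:
  assumes k: "admissible k" and c: "horizon_margin k r_max" and e: "0 < \<epsilon>" "\<epsilon> \<le> r_max" "Kf * \<epsilon> \<le> 1/4"
  shows "(2/3) * \<bar>k - \<kappa>0\<bar> \<le> \<bar>y_diff k \<epsilon>\<bar>"
proof -
  have cnt: "continuous_on {0..\<epsilon>} (\<lambda>z. \<bar>y_diff k z\<bar>)" using y_diff_continuous[OF k] by (intro continuous_intros)
  obtain x where x: "x \<in> {0..\<epsilon>}" "\<And>z. z \<in> {0..\<epsilon>} \<Longrightarrow> \<bar>y_diff k z\<bar> \<le> \<bar>y_diff k x\<bar>"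
    using continuous_attains_sup[OF compact_Icc _ cnt] e by auto
  define W where "W = \<bar>y_diff k x\<bar>"
  have W0: "W \<ge> 0" unfolding W_def by simp
  have cb: "horizon_margin k \<epsilon>" by (rule horizon_margin_mono[OF c e(2)])
  have inc: "\<bar>y_diff k z - y_diff k 0\<bar> \<le> W/4" if z: "z \<in> {0..\<epsilon>}" for z
  proof -
    have "\<bar>y_diff k z - y_diff k 0\<bar> \<le> (Kf * W) * \<bar>z - 0\<bar>"
    proof (rule y_diff_increment[OF k cb order_refl _ e(2)])
      fix u assume u: "u \<in> {0..\<epsilon>}" "0 < u"
      show "K1 * (\<bar>m_diff k u\<bar>/u\<^sup>2) + K2 * L_g * \<bar>y_diff k u\<bar> \<le> Kf * W"
        by (rule tov_rhs_diff_forward_bound[OF k e(2) W0]) (use x u in \<open>auto simp: W_def\<close>)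
    qed (use forward_step_size W0 z e in auto)
    also have "\<dots> \<le> (Kf * W) * \<epsilon>" using z forward_step_size W0 by (intro mult_left_mono) auto
    also have "\<dots> = (Kf * \<epsilon>) * W" by simp
    also have "\<dots> \<le> (1/4) * W" using e W0 by (intro mult_right_mono) auto
    finally show ?thesis by simp
  qed
  have d0: "y_diff k 0 = k - \<kappa>0" by (rule y_diff_0[OF k])
  have "W \<le> \<bar>k - \<kappa>0\<bar> + W/4" using inc[OF x(1)] d0 unfolding W_def by linarith
  then have "W \<le> (4/3) * \<bar>k - \<kappa>0\<bar>" by simp
  moreover have "\<bar>y_diff k \<epsilon> - y_diff k 0\<bar> \<le> W/4" using inc e by simp
  moreover have "\<bar>y_diff k 0\<bar> = \<bar>k - \<kappa>0\<bar>" using d0 by simp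
  ultimately show ?thesis
    using abs_triangle_ineq2[of "y_diff k 0" "y_diff k \<epsilon>"] abs_minus_commute[of "y_diff k \<epsilon>" "y_diff k 0"]
    by linarith
qed

subsection \<open>Comparison away from the centre\<close>

definition "Kb \<epsilon> = K1/\<epsilon>\<^sup>2 + K2*L_g + 4*pi*r_max\<^sup>2*L_g"
definition "\<delta>b \<epsilon> = 1/(2*Kb \<epsilon> + 1)"
definition "Nb \<epsilon> = nat \<lceil>R \<kappa>0/\<delta>b \<epsilon>\<rceil>"

lemma backward_step_size: "Kb \<epsilon> \<ge> 0" "\<delta>b \<epsilon> > 0" "Kb \<epsilon> * \<delta>b \<epsilon> \<le> 1/2" "R \<kappa>0 \<le> real (Nb \<epsilon>) * \<delta>b \<epsilon>"
proof -
  show kf: "Kb \<epsilon> \<ge> 0" unfolding Kb_def using K_nonneg L_g_Lipschitz by simp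
  show df: "\<delta>b \<epsilon> > 0" unfolding \<delta>b_def using kf by simp
  show "Kb \<epsilon> * \<delta>b \<epsilon> \<le> 1/2" unfolding \<delta>b_def using kf by (simp add: field_simps)
  have "R \<kappa>0/\<delta>b \<epsilon> \<le> real (Nb \<epsilon>)" unfolding Nb_def by linarith
  then show "R \<kappa>0 \<le> real (Nb \<epsilon>) * \<delta>b \<epsilon>" using df by (simp add: field_simps)
qed

lemma diff_increment_away_from_centre:
  assumes k: "admissible k" and c: "horizon_margin k r_max" and e: "0 < \<epsilon>"
    and xt: "\<epsilon> \<le> x" "x \<le> t" "t \<le> r_max"
    and Wy: "\<And>u. u \<in> {x..t} \<Longrightarrow> \<bar>y_diff k u\<bar> \<le> W" and Wm: "\<And>u. u \<in> {x..t} \<Longrightarrow> \<bar>m_diff k u\<bar> \<le> W"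
  shows "\<bar>y_diff k t - y_diff k x\<bar> + \<bar>m_diff k t - m_diff k x\<bar> \<le> Kb \<epsilon> * W * (t - x)"
proof -
  have W0: "W \<ge> 0" using Wy[of x] xt by (smt (verit) abs_ge_zero atLeastAtMost_iff)
  have x0: "0 \<le> x" using e xt by simp
  have a1: "\<bar>y_diff k t - y_diff k x\<bar> \<le> ((K1/\<epsilon>\<^sup>2 + K2*L_g) * W) * \<bar>t - x\<bar>"
  proof (rule y_diff_increment[OF k horizon_margin_mono[OF c xt(3)] x0 xt(2,3)])
    fix z assume z: "z \<in> {x..t}" "0 < z"
    have "K1 * (\<bar>m_diff k z\<bar>/z\<^sup>2) \<le> K1 * (W/\<epsilon>\<^sup>2)"
    proof (rule mult_left_mono[OF _ K_nonneg(1)])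
      have "\<bar>m_diff k z\<bar>/z\<^sup>2 \<le> W/z\<^sup>2" using Wm[OF z(1)] z by (simp add: divide_right_mono)
      also have "\<dots> \<le> W/\<epsilon>\<^sup>2" using W0 z xt e by (intro divide_left_mono power_mono) auto
      finally show "\<bar>m_diff k z\<bar>/z\<^sup>2 \<le> W/\<epsilon>\<^sup>2" .
    qed
    moreover have "K2 * L_g * \<bar>y_diff k z\<bar> \<le> K2 * L_g * W" using Wy[OF z(1)] K_nonneg L_g_Lipschitz by (intro mult_left_mono) auto
    ultimately show "K1 * (\<bar>m_diff k z\<bar>/z\<^sup>2) + K2 * L_g * \<bar>y_diff k z\<bar> \<le> (K1/\<epsilon>\<^sup>2 + K2*L_g) * W"
      by (simp add: algebra_simps)
  next
    show "(K1/\<epsilon>\<^sup>2 + K2*L_g) * W \<ge> 0" using K_nonneg L_g_Lipschitz W0 by simp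
  qed (use xt in auto)
  have "\<bar>m_diff k t - m_diff k x\<bar> \<le> 4*pi*t\<^sup>2*L_g*W * (t - x)"
    by (rule m_diff_increment[OF k x0 xt(2)]) (use Wy in auto)
  also have "\<dots> \<le> 4*pi*r_max\<^sup>2*L_g*W * (t - x)"
    using xt x0 L_g_Lipschitz W0 by (intro mult_right_mono mult_left_mono power_mono) auto
  finally have a2: "\<bar>m_diff k t - m_diff k x\<bar> \<le> (4*pi*r_max\<^sup>2*L_g*W) * (t - x)" .
  have "\<bar>t - x\<bar> = t - x" using xt by simp
  then show ?thesis using a1 a2 unfolding Kb_def by (simp add: algebra_simps)
qed

lemma diff_backward_bound:
  assumes k: "admissible k" and c: "horizon_margin k r_max" and e: "0 < \<epsilon>" "\<epsilon> \<le> R \<kappa>0" and r: "r \<in> {\<epsilon>..R \<kappa>0}"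
  shows "\<bar>y_diff k r\<bar> + \<bar>m_diff k r\<bar> \<le> 2^(Nb \<epsilon>) * (\<bar>y_diff k (R \<kappa>0)\<bar> + \<bar>m_diff k (R \<kappa>0)\<bar>)"
proof (rule stepwise_doubling_bound_backward[where D="\<lambda>r. \<bar>y_diff k r\<bar> + \<bar>m_diff k r\<bar>"
      and \<delta>="\<delta>b \<epsilon>" and a=\<epsilon> and b="R \<kappa>0" and n="Nb \<epsilon>"])
  show "continuous_on {\<epsilon>..R \<kappa>0} (\<lambda>r. \<bar>y_diff k r\<bar> + \<bar>m_diff k r\<bar>)"
    by (intro continuous_intros continuous_on_subset[OF y_diff_continuous[OF k]] continuous_on_subset[OF m_diff_continuous[OF k]])
       (use e in auto)
  show "R \<kappa>0 - \<epsilon> \<le> real (Nb \<epsilon>) * \<delta>b \<epsilon>" using backward_step_size(4)[of \<epsilon>] e by simp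
next
  fix s t W x
  assume h: "\<epsilon> \<le> s" "s \<le> t" "t \<le> R \<kappa>0" "t - s \<le> \<delta>b \<epsilon>"
    "\<forall>r\<in>{s..R \<kappa>0}. \<bar>y_diff k r\<bar> + \<bar>m_diff k r\<bar> \<le> W" "x \<in> {s..t}"
  have W: "\<bar>y_diff k u\<bar> \<le> W" "\<bar>m_diff k u\<bar> \<le> W" if "u \<in> {x..t}" for u
    using h(5) h(3,6) that by (smt (verit) abs_ge_zero atLeastAtMost_iff)+
  have W0: "W \<ge> 0" using W(1)[of x] h by (smt (verit) abs_ge_zero atLeastAtMost_iff)
  have "\<bar>y_diff k t - y_diff k x\<bar> + \<bar>m_diff k t - m_diff k x\<bar> \<le> Kb \<epsilon> * W * (t - x)"
    by (rule diff_increment_away_from_centre[OF k c e(1) _ _ _ W]) (use h r_max_bounds in auto)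
  also have "\<dots> \<le> (Kb \<epsilon> * W) * \<delta>b \<epsilon>" using h backward_step_size W0 by (intro mult_left_mono) auto
  also have "\<dots> = (Kb \<epsilon> * \<delta>b \<epsilon>) * W" by simp
  also have "\<dots> \<le> (1/2) * W" using backward_step_size W0 by (intro mult_right_mono) auto
  finally have "\<bar>y_diff k t - y_diff k x\<bar> + \<bar>m_diff k t - m_diff k x\<bar> \<le> W/2" by simp
  then show "\<bar>y_diff k x\<bar> + \<bar>m_diff k x\<bar> \<le> \<bar>y_diff k t\<bar> + \<bar>m_diff k t\<bar> + W/2"
    using abs_triangle_ineq2[of "y_diff k x" "y_diff k t"] abs_triangle_ineq2[of "m_diff k x" "m_diff k t"]
      abs_minus_commute[of "y_diff k t" "y_diff k x"] abs_minus_commute[of "m_diff k t" "m_diff k x"] by linarith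
qed (use e r backward_step_size in auto)

definition "K_y = (C_m + 4*pi*g_max) * r_max / \<beta>"

lemma K_y_nonneg: "K_y \<ge> 0" unfolding K_y_def using K_nonneg g_max_pos r_max_bounds beta_bounds by simp

lemma y_Lipschitz: assumes k: "admissible k" and c: "horizon_margin k r_max" and ab: "a \<in> {0..r_max}" "b \<in> {0..r_max}"
  shows "\<bar>y k a - y k b\<bar> \<le> K_y * \<bar>a - b\<bar>"
proof (rule abs_diff_le_of_derivative_bound[of 0 "r_max"])
  fix x assume x: "x \<in> {0..r_max}"
  show "(y k has_real_derivative tov_rhs (m k x) (P (g (y k x))) x) (at x within {0..r_max})"
    by (rule tov_sol_has_derivative_Icc[OF admissible_sol[OF k] order_refl x])
  show "\<bar>tov_rhs (m k x) (P (g (y k x))) x\<bar> \<le> K_y"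
  proof (cases "x = 0")
    case True then show ?thesis using K_y_nonneg by (simp add: tov_rhs_0)
  next
    case False
    then have xp: "0 < x" using x by simp
    show ?thesis unfolding K_y_def
    proof (rule tov_rhs_bound[OF xp])
      show "x \<le> r_max" using x by simp
      show "0 \<le> m k x" "m k x \<le> C_m * x^3" using admissible_mass_bounds[OF k, of x] x unfolding C_m_def by auto
      show "0 \<le> P (g (y k x))" "P (g (y k x)) \<le> g_max" using admissible_P_bounds[OF k, of x] x by auto
      show "\<beta> * x \<le> x - 2 * m k x" using c x xp unfolding horizon_margin_def by auto
      show "\<beta> > 0" by (rule beta_bounds(1))
    qed
  qed
qed (use ab in auto)

lemma mass_Lipschitz: assumes k: "admissible k" and ab: "a \<in> {0..r_max}" "b \<in> {0..r_max}"
  shows "\<bar>m k a - m k b\<bar> \<le> (4*pi*r_max\<^sup>2*g_max) * \<bar>a - b\<bar>"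
proof (rule abs_diff_le_of_derivative_bound[of 0 "r_max"])
  fix x assume x: "x \<in> {0..r_max}"
  show "(m k has_real_derivative 4 * pi * (x\<^sup>2 * g (y k x))) (at x within {0..r_max})"
    by (rule mass_has_derivative[OF admissible_sol[OF k] x])
  have "x\<^sup>2 * g (y k x) \<le> r_max\<^sup>2 * g_max" using admissible_g_bounds[OF k, of x] x by (intro mult_mono power_mono) auto
  moreover have "0 \<le> g (y k x)" using admissible_g_bounds[OF k, of x] x by simp
  ultimately show "\<bar>4 * pi * (x\<^sup>2 * g (y k x))\<bar> \<le> 4*pi*r_max\<^sup>2*g_max" by simp
qed (use ab in auto)

lemma R_has_derivative_0:
  assumes dM: "(M has_real_derivative 0) (at \<kappa>0)"
    and dMR: "((\<lambda>k. M k / R k) has_real_derivative 0) (at \<kappa>0)"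
  shows "(R has_real_derivative 0) (at \<kappa>0)"
proof -
  have "M \<kappa>0 / R \<kappa>0 \<noteq> 0" using M_pos[OF k0] radius[OF k0] by simp
  then have deriv: "((\<lambda>k. M k / (M k / R k)) has_real_derivative 0) (at \<kappa>0)"
    using DERIV_divide[OF dM dMR] by simp
  have "M k / (M k / R k) = R k" if "k \<in> {0<..}" for k
    using M_pos[of k] radius[of k] that by simp
  then show ?thesis using has_field_derivative_transform_within_open[OF deriv, of "{0<..}" R] k0 by simp
qed

lemma diff_at_radius_bound:
  assumes k: "admissible k" and c: "horizon_margin k r_max" and Rk: "R k \<le> r_max"
    and dR: "\<bar>R k - R \<kappa>0\<bar> \<le> \<delta>" and dM: "\<bar>M k - M \<kappa>0\<bar> \<le> \<delta>"
  shows "\<bar>y_diff k (R \<kappa>0)\<bar> + \<bar>m_diff k (R \<kappa>0)\<bar> \<le> (K_y + 4*pi*r_max\<^sup>2*g_max + 1) * \<delta>"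
proof -
  have kp: "k > 0" using k unfolding admissible_def by simp
  have radii: "R k \<in> {0..r_max}" "R \<kappa>0 \<in> {0..r_max}" using Rk radius[OF kp] radius[OF k0] r_max_bounds by auto
  have "\<bar>y_diff k (R \<kappa>0)\<bar> = \<bar>y k (R \<kappa>0) - y k (R k)\<bar>"
    unfolding y_diff_def using radius[OF kp] radius[OF k0] by simp
  also have "\<dots> \<le> K_y * \<bar>R \<kappa>0 - R k\<bar>" by (rule y_Lipschitz[OF k c radii(2,1)])
  also have "\<dots> \<le> K_y * \<delta>" using dR K_y_nonneg by (intro mult_left_mono) (auto simp: abs_minus_commute)
  finally have dy: "\<bar>y_diff k (R \<kappa>0)\<bar> \<le> K_y * \<delta>" .
  have "m_diff k (R \<kappa>0) = (m k (R \<kappa>0) - m k (R k)) + (M k - M \<kappa>0)"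
    unfolding m_diff_def mass[OF kp] mass[OF k0] by simp
  then have "\<bar>m_diff k (R \<kappa>0)\<bar> \<le> \<bar>m k (R \<kappa>0) - m k (R k)\<bar> + \<delta>" using dM by linarith
  also have "\<bar>m k (R \<kappa>0) - m k (R k)\<bar> \<le> (4*pi*r_max\<^sup>2*g_max) * \<bar>R \<kappa>0 - R k\<bar>"
    by (rule mass_Lipschitz[OF k radii(2,1)])
  also have "\<dots> \<le> (4*pi*r_max\<^sup>2*g_max) * \<delta>"
    using dR g_max_pos by (intro mult_left_mono) (auto simp: abs_minus_commute)
  finally have "\<bar>m_diff k (R \<kappa>0)\<bar> \<le> (4*pi*r_max\<^sup>2*g_max) * \<delta> + \<delta>" by simp
  with dy show ?thesis by (simp add: algebra_simps)
qed

lemma centre_radius_exists: "\<exists>\<epsilon>>0. \<epsilon> \<le> R \<kappa>0 \<and> Kf * \<epsilon> \<le> 1/4"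
proof (intro exI conjI)
  let ?\<epsilon> = "min (R \<kappa>0) (1/(4*Kf+1))"
  show "0 < ?\<epsilon>" "?\<epsilon> \<le> R \<kappa>0" using r_max_bounds forward_step_size by simp_all
  have "Kf * ?\<epsilon> \<le> Kf * (1/(4*Kf+1))" using forward_step_size by (intro mult_left_mono) auto
  also have "\<dots> \<le> 1/4" using forward_step_size by (simp add: field_simps)
  finally show "Kf * ?\<epsilon> \<le> 1/4" .
qed

lemma no_double_critical_point:
  assumes dM: "(M has_real_derivative 0) (at \<kappa>0)"
    and dMR: "((\<lambda>k. M k / R k) has_real_derivative 0) (at \<kappa>0)"
  shows False
proof -
  obtain \<epsilon> where eps: "0 < \<epsilon>" "\<epsilon> \<le> R \<kappa>0" "Kf * \<epsilon> \<le> 1/4"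
    using centre_radius_exists by blast
  then have eps_max: "\<epsilon> \<le> r_max" using r_max_bounds by simp
  define N where "N = Nb \<epsilon>"
  define A where "A = K_y + 4*pi*r_max\<^sup>2*g_max + 1"
  have A: "A \<ge> 1" unfolding A_def using K_y_nonneg g_max_pos by simp
  define e where "e = 1/(3 * 2^N * A)"
  have e: "e > 0" "e \<le> 1/3" "2^N * A * e = 1/3"
  proof -
    show "e > 0" unfolding e_def using A by simp
    have "3 * 2^N * A \<ge> 3" using A by (smt (verit) mult_le_cancel_left1 one_le_power)
    then show "e \<le> 1/3" unfolding e_def by (simp add: field_simps)
    show "2^N * A * e = 1/3" unfolding e_def using A by simp
  qed
  obtain d1 where d1: "d1 > 0" "\<And>z. \<bar>z - \<kappa>0\<bar> < d1 \<Longrightarrow> \<bar>M z - M \<kappa>0\<bar> \<le> e * \<bar>z - \<kappa>0\<bar>"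
    using small_increment_of_zero_derivative[OF dM e(1)] by blast
  obtain d2 where d2: "d2 > 0" "\<And>z. \<bar>z - \<kappa>0\<bar> < d2 \<Longrightarrow> \<bar>R z - R \<kappa>0\<bar> \<le> e * \<bar>z - \<kappa>0\<bar>"
    using small_increment_of_zero_derivative[OF R_has_derivative_0[OF dM dMR] e(1)] by blast
  define h where "h = min (min d1 d2) (min \<eta> (1/2)) / 2"
  have h: "h > 0" "h < d1" "h < d2" "h \<le> \<eta>" "h \<le> 1/4"
    unfolding h_def using d1 d2 tol_eta_props by (auto simp: min_def)
  define k where "k = \<kappa>0 + h"
  have hk: "\<bar>k - \<kappa>0\<bar> = h" unfolding k_def using h by simp
  have k: "admissible k" unfolding admissible_def y_max_def k_def using k0 h by simp
  have c: "horizon_margin k r_max" by (rule horizon_margin_near_kappa0[OF k]) (use hk h in simp)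
  have dR: "\<bar>R k - R \<kappa>0\<bar> \<le> e * h" using d2(2)[of k] hk h by simp
  have dM': "\<bar>M k - M \<kappa>0\<bar> \<le> e * h" using d1(2)[of k] hk h by simp
  have "e * h \<le> (1/3) * (1/4)" using e h by (intro mult_mono) auto
  then have Rk: "R k \<le> r_max" using dR unfolding r_max_def by simp
  have "\<bar>y_diff k \<epsilon>\<bar> + \<bar>m_diff k \<epsilon>\<bar> \<le> 2^N * (\<bar>y_diff k (R \<kappa>0)\<bar> + \<bar>m_diff k (R \<kappa>0)\<bar>)"
    unfolding N_def by (rule diff_backward_bound[OF k c eps(1,2)]) (use eps in auto)
  also have "\<dots> \<le> 2^N * (A * (e * h))"
    using diff_at_radius_bound[OF k c Rk dR dM'] unfolding A_def by (intro mult_left_mono) auto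
  also have "\<dots> = (2^N * A * e) * h" by simp
  also have "\<dots> = h/3" using e by simp
  finally have "\<bar>y_diff k \<epsilon>\<bar> \<le> h/3" by simp
  moreover have "(2/3) * \<bar>k - \<kappa>0\<bar> \<le> \<bar>y_diff k \<epsilon>\<bar>"
    by (rule y_diff_near_centre_lower_bound[OF k c eps(1) eps_max eps(3)])
  ultimately show False using hk h by simp
qed

end

theorem lemma2p7:
  fixes P P' :: "real \<Rightarrow> real"
    and y :: "real \<Rightarrow> real \<Rightarrow> real"
    and R M :: "real \<Rightarrow> real"
  assumes eos: "eos P P'"
    and sol: "\<And>\<kappa>. \<kappa> > 0 \<Longrightarrow> tov_sol P P' \<kappa> (y \<kappa>)"
    and radius: "\<And>\<kappa>. \<kappa> > 0 \<Longrightarrow> R \<kappa> > 0 \<and> y \<kappa> (R \<kappa>) = 0"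
    and mass: "\<And>\<kappa>. \<kappa> > 0 \<Longrightarrow> M \<kappa> = massf P P' (y \<kappa>) (R \<kappa>)"
  shows "\<not> (\<exists>\<kappa>>0. (M has_real_derivative 0) (at \<kappa>) \<and>
                    ((\<lambda>k. M k / R k) has_real_derivative 0) (at \<kappa>))"
proof
  assume "\<exists>\<kappa>>0. (M has_real_derivative 0) (at \<kappa>) \<and> ((\<lambda>k. M k / R k) has_real_derivative 0) (at \<kappa>)"
  then obtain \<kappa>0 where k0: "\<kappa>0 > 0" and d: "(M has_real_derivative 0) (at \<kappa>0)"
    "((\<lambda>k. M k / R k) has_real_derivative 0) (at \<kappa>0)" by blast
  interpret tov_family P P' y R M \<kappa>0
    by (unfold_locales) (use eos sol radius mass k0 in auto)
  show False by (rule no_double_critical_point[OF d])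
qed

end
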